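(* Assume (A1)–(A5) from the context. Let $T\ge1$, and let the step sizes $\alpha,\beta>0$ satisfy $$0<\alpha(\rho+L)+4\alpha^2L^2\le\min\left\{\tfrac12,\ \frac{4\mu(\rho+L)+64L^2}{\mu^2}\right\}$$ and $$12(6+\delta)\beta^2K^2L^2\le\min\left\{\tfrac1{16},\ 1-\tfrac{\alpha\mu}{4}\right\},\qquad\text{where }\delta=\frac1{(1-\alpha\rho)^2}.$$ Then the iterates generated by FedCanon satisfy $$\mathbb{E}[\phi(z^T)-\phi^*]+\alpha\mathcal{E}^T\le\left(1-\frac{\alpha\mu}{4}\right)^T\left[\phi(z^0)-\phi^*+\alpha\mathcal{E}^0\right]+\frac{25\sigma^2}{\mu BK}+\frac{\sigma^2}{16\mu B}+\frac{B_h}{2\mu}.$$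
   Context: Let $N,d,K,B$ be positive integers and $[N]=\{1,\dots,N\}$. For each client $i\in[N]$ let $f_i(x)=\mathbb{E}_{\xi\sim\mathcal{D}_i}[F_i(x;\xi)]$. Let $f=\frac1N\sum_{i=1}^N f_i$, let $h:\mathbb{R}^d\to\mathbb{R}\cup\{+\infty\}$, and let $\phi=f+h$. Standing assumptions: (A1) $\phi^*:=\inf_z\phi(z)>-\infty$. (A2) There is $L>0$ such that for every $i$ and all $x,y$: $f_i(x)-f_i(y)-\langle\nabla f_i(y),x-y\rangle\le \frac L2\Vert x-y\Vert^2$ and $\Vert\nabla f_i(x)-\nabla f_i(y)\Vert\le L\Vert x-y\Vert$. (A3) $h$ is proper, closed and $\rho$-weakly convex for some $\rho\ge0$, i.e. $h(z)+\frac{\rho}{2}\Vert z\Vert^2$ is convex. There is a constant $B_h$ such that $\Vert h'(z)\Vert^2\le B_h$ for every $z$ and every subgradient $h'(z)\in\partial h(z)$. (A4) Whenever client $i$ evaluates $g_i(x)$, it draws $B$ fresh samples $\xi_{i,1},\dots,\xi_{i,B}\sim\mathcal{D}_i$, independent of the past, and sets $g_i(x)=\frac1B\sum_{b}\nabla F_i(x;\xi_{i,b})$. Conditionally on the past, $\mathbb{E}[g_i(x)]=\nabla f_i(x)$ and $\mathbb{E}\Vert g_i(x)-\nabla f_i(x)\Vert^2\le\sigma^2/B$. (A5) (Generalized PL condition) There is $\mu>0$ such that for all $z\in\mathbb{R}^d$, $\Vert G^\alpha(z)\Vert^2\ge2\mu[\phi(z)-\phi^*]$. Proximal operator: $\mathbf{prox}_{\alpha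 h}\{y\}=\arg\min_x\{h(x)+\frac1{2\alpha}\Vert x-y\Vert^2\}$. Algorithm FedCanon. The inputs are $\alpha,\beta>0$, an initial point $z^0$, and control variables $c_i^0$ with $\sum_ic_i^0=\mathbf{0}_d$. For $t=0,1,\dots$: - every client $i$ sets $\hat x_i^{t,0}=z^t$; - for $k=0,\dots,K-1$ it updates $\hat x_i^{t,k+1}=\hat x_i^{t,k}-\beta[g_i(\hat x_i^{t,k})+c_i^t]$; - it forms $\Delta_i^{t+1}=\frac1{\beta K}(z^t-\hat x_i^{t,K})$; - the server computes $\bar\Delta^{t+1}=\frac1N\sum_i\Delta_i^{t+1}$ and $z^{t+1}=\mathbf{prox}_{\alpha h}\{z^t-\alpha\bar\Delta^{t+1}\}$; - every client updates $c_i^{t+1}=c_i^t+\bar\Delta^{t+1}-\Delta_i^{t+1}$. (The variant FedCanon II, with local prox steps from a common initialization, generates the same sequence.) Notation: - $G^\alpha(z,u)=\frac1\alpha(z-\mathbf{prox}_{\alpha h}\{z-\alpha u\})$ and $G^\alpha(z)=G^\alpha(z,\nabla f(z))$. - $v_i^t=\frac1K\sum_{k=0}^{K-1}g_i(\hat x_i^{t,k})$ and $\bar v^t=\frac1N\sum_iv_i^t$. - $\mathcal{E}^t=\frac1N\sum_i\mathbb{E}\Vert\nabla f_i(z^t)+c_i^t-\nabla f(z^t)\Vert^2$. For $t\ge1$ this equals $\frac1N\sum_i\mathbb{E}\Vert\nabla f_i(\hat x_i^{t,0})-v_i^{t-1}-\nabla f(z^t)+\bar v^{t-1}\Vert^2$.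 - $\mathbb{E}$ is expectation over all sampling. *)

theory Defs
  imports "HOL-Probability.Probability"
begin

text \<open>Proximal operator: a minimiser of h(x) + norm(x - y)^2 / (2 alpha).
  (Unique whenever alpha * rho < 1, which the step-size hypotheses guarantee.)\<close>
definition prox :: "real \<Rightarrow> ('a::real_normed_vector \<Rightarrow> real) \<Rightarrow> 'a \<Rightarrow> 'a" where
  "prox \<alpha> h y = (SOME x. \<forall>u. h x + (norm (x - y))\<^sup>2 / (2 * \<alpha>) \<le> h u + (norm (u - y))\<^sup>2 / (2 * \<alpha>))"

text \<open>(Regular / Frechet) subdifferential; for weakly convex h it coincides with the
  usual convex-analytic one shifted by the quadratic.\<close>
definition subdiff :: "('a::real_inner \<Rightarrow> real) \<Rightarrow> 'a \<Rightarrow> 'a set" where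
  "subdiff h z = {v. \<forall>\<epsilon>>0. \<exists>\<delta>>0. \<forall>y. norm (y - z) < \<delta> \<longrightarrow>
                      h y \<ge> h z + inner v (y - z) - \<epsilon> * norm (y - z)}"

definition Gmap :: "real \<Rightarrow> ('a::real_normed_vector \<Rightarrow> real) \<Rightarrow> 'a \<Rightarrow> 'a \<Rightarrow> 'a" where
  "Gmap \<alpha> h z u = (1 / \<alpha>) *\<^sub>R (z - prox \<alpha> h (z - \<alpha> *\<^sub>R u))"

text \<open>Local iterates of client i in a round: xhat^{t,k}. Argument xi k b is the b-th
  sample drawn at local step k (of this round, this client); c is the control variable.\<close>
primrec xhat :: "(nat \<Rightarrow> 'a::real_vector \<Rightarrow> 'b \<Rightarrow> 'a) \<Rightarrow> nat \<Rightarrow> real \<Rightarrow> nat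
                 \<Rightarrow> (nat \<Rightarrow> nat \<Rightarrow> 'b) \<Rightarrow> 'a \<Rightarrow> 'a \<Rightarrow> nat \<Rightarrow> 'a" where
  "xhat gF B \<beta> i xi c z 0 = z"
| "xhat gF B \<beta> i xi c z (Suc k) =
     (let x = xhat gF B \<beta> i xi c z k
      in x - \<beta> *\<^sub>R ((1 / real B) *\<^sub>R (\<Sum>b<B. gF i x (xi k b)) + c))"

definition Delta :: "(nat \<Rightarrow> 'a::real_vector \<Rightarrow> 'b \<Rightarrow> 'a) \<Rightarrow> nat \<Rightarrow> nat \<Rightarrow> real \<Rightarrow> nat
                 \<Rightarrow> (nat \<Rightarrow> nat \<Rightarrow> 'b) \<Rightarrow> 'a \<Rightarrow> 'a \<Rightarrow> 'a" where
  "Delta gF K B \<beta> i xi c z = (1 / (\<beta> * real K)) *\<^sub>R (z - xhat gF B \<beta> i xi c z K)"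

text \<open>FedCanon: returns (z^t, c^t) where c^t i is the control variable of client i
  (clients are indexed 0..N-1).  xi t i k b is the b-th sample drawn by client i at local
  step k of round t.\<close>
primrec fedcanon :: "(nat \<Rightarrow> 'a::real_normed_vector \<Rightarrow> 'b \<Rightarrow> 'a) \<Rightarrow> ('a \<Rightarrow> real)
      \<Rightarrow> nat \<Rightarrow> nat \<Rightarrow> nat \<Rightarrow> real \<Rightarrow> real \<Rightarrow> 'a \<Rightarrow> (nat \<Rightarrow> 'a)
      \<Rightarrow> (nat \<Rightarrow> nat \<Rightarrow> nat \<Rightarrow> nat \<Rightarrow> 'b) \<Rightarrow> nat \<Rightarrow> 'a \<times> (nat \<Rightarrow> 'a)" where
  "fedcanon gF h N K B \<alpha> \<beta> z0 c0 xi 0 = (z0, c0)"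
| "fedcanon gF h N K B \<alpha> \<beta> z0 c0 xi (Suc t) =
     (let zc = fedcanon gF h N K B \<alpha> \<beta> z0 c0 xi t;
          z = fst zc; c = snd zc;
          D = (\<lambda>i. Delta gF K B \<beta> i (xi t i) (c i) z);
          Dbar = (1 / real N) *\<^sub>R (\<Sum>i<N. D i)
      in (prox \<alpha> h (z - \<alpha> *\<^sub>R Dbar), \<lambda>i. c i + Dbar - D i))"

end

theory Submission
  imports Defs
begin

(* The Lyapunov function Phi(z, c) = phi(z) - phi* + alpha E(z, c) contracts by the factor
   1 - alpha mu / 4 in every round, up to noise.  The prox step decreases phi by the squared
   step length, up to the error of the aggregated direction; the control variables turn the
   new error into a deviation from a mean, bounded by the step length and the bias of the
   local averages v_i.  The bias splits into sampling noise and client drift, and the drift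
   of the K local steps is controlled through the corrected gradients grad f_i(z) + c_i, that
   is through E and |grad f(z)|^2, the latter bounded by the gradient mapping up to B_h.  The
   PL condition converts the decrease in |G(z)|^2 into the contraction.
   For the noise, all samples are coordinates of a finite product of probability spaces;
   every sample is fresh for the point where it is used, so integrating it out first bounds
   the second moment of the accumulated noise by the sum of the variances.  Unrolling the
   recursion and summing the geometric series gives the bound. *)

lemma norm_add_square:
  fixes a b :: "'a::real_inner"
  shows "(norm (a + b))\<^sup>2 = (norm a)\<^sup>2 + 2 * inner a b + (norm b)\<^sup>2"
  using dot_norm[of a b] by simp

lemma norm_diff_square:
  fixes a b :: "'a::real_inner"
  shows "(norm (a - b))\<^sup>2 = (norm a)\<^sup>2 - 2 * inner a b + (norm b)\<^sup>2"
  using norm_add_square[of a "-b"] by simp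

lemma two_mult_le_weighted_squares:
  fixes a b l :: real
  assumes "l > 0"
  shows "2 * (a * b) \<le> l * a\<^sup>2 + b\<^sup>2 / l"
proof -
  have "0 \<le> (l * a - b)\<^sup>2 / l" using assms by simp
  also have "\<dots> = l * a\<^sup>2 - 2 * (a * b) + b\<^sup>2 / l"
    using assms by (simp add: power2_diff field_simps power2_eq_square)
  finally show ?thesis by simp
qed

lemma norm_add_square_le:
  fixes x y :: "'a::real_inner"
  assumes "l > 0"
  shows "(norm (x + y))\<^sup>2 \<le> (1 + l) * (norm x)\<^sup>2 + (1 + 1 / l) * (norm y)\<^sup>2"
proof -
  have "inner x y \<le> norm x * norm y" by (rule norm_cauchy_schwarz)
  moreover have "2 * (norm x * norm y) \<le> l * (norm x)\<^sup>2 + (norm y)\<^sup>2 / l"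
    using two_mult_le_weighted_squares[OF assms] .
  ultimately show ?thesis using norm_add_square[of x y] by (simp add: algebra_simps)
qed

lemma norm_sum_square_le:
  fixes x :: "'i \<Rightarrow> 'a::real_normed_vector"
  assumes "finite I"
  shows "(norm (\<Sum>i\<in>I. x i))\<^sup>2 \<le> real (card I) * (\<Sum>i\<in>I. (norm (x i))\<^sup>2)"
proof -
  have "(norm (\<Sum>i\<in>I. x i))\<^sup>2 \<le> (\<Sum>i\<in>I. norm (x i))\<^sup>2"
    by (intro power_mono norm_sum) simp
  also have "\<dots> \<le> (\<Sum>i\<in>I. (norm (x i))\<^sup>2) * card I" by (rule sum_squared_le_sum_of_squares)
  finally show ?thesis by (simp add: mult.commute)
qed

lemma norm_mean_square_le:
  fixes x :: "nat \<Rightarrow> 'a::real_normed_vector"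
  assumes "N > 0"
  shows "(norm ((1 / real N) *\<^sub>R (\<Sum>i<N. x i)))\<^sup>2 \<le> (1 / real N) * (\<Sum>i<N. (norm (x i))\<^sup>2)"
proof -
  have "(norm ((1 / real N) *\<^sub>R (\<Sum>i<N. x i)))\<^sup>2 = (1 / real N)\<^sup>2 * (norm (\<Sum>i<N. x i))\<^sup>2"
    by (simp add: power_mult_distrib power_divide)
  also have "\<dots> \<le> (1 / real N)\<^sup>2 * (real N * (\<Sum>i<N. (norm (x i))\<^sup>2))"
    using norm_sum_square_le[of "{..<N}" x] by (intro mult_left_mono) auto
  also have "\<dots> = (1 / real N) * (\<Sum>i<N. (norm (x i))\<^sup>2)"
    using assms by (simp add: power2_eq_square)
  finally show ?thesis .
qed

lemma sum_norm_square_mean_decomp: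
  fixes q :: "nat \<Rightarrow> 'a::real_inner"
  assumes "N > 0"
  shows "(\<Sum>i<N. (norm (q i))\<^sup>2) = (\<Sum>i<N. (norm (q i - (1 / real N) *\<^sub>R (\<Sum>j<N. q j)))\<^sup>2)
     + real N * (norm ((1 / real N) *\<^sub>R (\<Sum>j<N. q j)))\<^sup>2"
proof -
  define m where "m = (1 / real N) *\<^sub>R (\<Sum>j<N. q j)"
  have sm: "(\<Sum>j<N. q j) = real N *\<^sub>R m" using assms by (simp add: m_def)
  have "(\<Sum>i<N. (norm (q i - m))\<^sup>2) = (\<Sum>i<N. (norm (q i))\<^sup>2 - 2 * inner (q i) m + (norm m)\<^sup>2)"
    by (simp add: norm_diff_square)
  also have "\<dots> = (\<Sum>i<N. (norm (q i))\<^sup>2) - 2 * inner (\<Sum>i<N. q i) m + real N * (norm m)\<^sup>2"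
    by (simp add: sum.distrib sum_subtractf inner_sum_left sum_distrib_left)
  also have "\<dots> = (\<Sum>i<N. (norm (q i))\<^sup>2) - real N * (norm m)\<^sup>2"
    unfolding sm by (simp add: power2_norm_eq_inner)
  finally show ?thesis by (simp add: m_def[symmetric])
qed

lemma mean_norm_square_deviation_le:
  fixes q :: "nat \<Rightarrow> 'a::real_inner"
  assumes "N > 0"
  shows "(1 / real N) * (\<Sum>i<N. (norm (q i - (1 / real N) *\<^sub>R (\<Sum>j<N. q j)))\<^sup>2)
     \<le> (1 / real N) * (\<Sum>i<N. (norm (q i))\<^sup>2)"
  using sum_norm_square_mean_decomp[OF assms, of q] by (intro mult_left_mono) auto

lemma three_sum_squares_le_cube: "3 * (\<Sum>k<n. (real k)\<^sup>2) \<le> (real n) ^ 3"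
proof (induction n)
  case (Suc n)
  have "3 * (\<Sum>k<Suc n. (real k)\<^sup>2) = 3 * (\<Sum>k<n. (real k)\<^sup>2) + 3 * (real n)\<^sup>2" by simp
  also have "\<dots> \<le> (real n) ^ 3 + 3 * (real n)\<^sup>2" using Suc by simp
  also have "\<dots> \<le> (real (Suc n)) ^ 3" by (simp add: power3_eq_cube power2_eq_square algebra_simps)
  finally show ?case .
qed simp

lemma two_sum_le_square: "2 * (\<Sum>k<n. real k) \<le> (real n)\<^sup>2"
proof (induction n)
  case (Suc n)
  have "2 * (\<Sum>k<Suc n. real k) = 2 * (\<Sum>k<n. real k) + 2 * real n" by simp
  also have "\<dots> \<le> (real n)\<^sup>2 + 2 * real n" using Suc by simp
  also have "\<dots> \<le> (real (Suc n))\<^sup>2" by (simp add: power2_eq_square algebra_simps)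
  finally show ?case .
qed simp

section \<open>Weakly convex functions and the proximal map\<close>

lemma weakly_convex_continuous:
  fixes h :: "'a::euclidean_space \<Rightarrow> real"
  assumes "convex_on UNIV (\<lambda>x. h x + \<rho> / 2 * (norm x)\<^sup>2)"
  shows "continuous_on UNIV h"
proof -
  have cg: "continuous_on UNIV (\<lambda>x. h x + \<rho> / 2 * (norm x)\<^sup>2)"
    using convex_on_continuous[OF _ assms] by simp
  have "continuous_on UNIV (\<lambda>x. (h x + \<rho> / 2 * (norm x)\<^sup>2) - \<rho> / 2 * (norm x)\<^sup>2)"
    by (intro continuous_intros cg)
  then show ?thesis by simp
qed

lemma weakly_convex_segment_le:
  fixes h :: "'a::real_inner \<Rightarrow> real"
  assumes wc: "convex_on UNIV (\<lambda>x. h x + \<rho> / 2 * (norm x)\<^sup>2)" and t: "0 \<le> t" "t \<le> 1"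
  shows "h (x + t *\<^sub>R (y - x)) \<le> h x + t * (h y - h x) + \<rho> / 2 * (t - t\<^sup>2) * (norm (y - x))\<^sup>2"
proof -
  define d where "d = y - x"
  have "h ((1 - t) *\<^sub>R x + t *\<^sub>R y) + \<rho> / 2 * (norm ((1 - t) *\<^sub>R x + t *\<^sub>R y))\<^sup>2
      \<le> (1 - t) * (h x + \<rho> / 2 * (norm x)\<^sup>2) + t * (h y + \<rho> / 2 * (norm y)\<^sup>2)"
    using convex_onD[OF wc, of t x y] t by simp
  moreover have "(1 - t) *\<^sub>R x + t *\<^sub>R y = x + t *\<^sub>R d"
    by (simp add: d_def algebra_simps)
  moreover have "(norm (x + t *\<^sub>R d))\<^sup>2 = (norm x)\<^sup>2 + 2 * t * inner x d + t\<^sup>2 * (norm d)\<^sup>2"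
    by (simp add: norm_add_square power_mult_distrib)
  moreover have "(norm y)\<^sup>2 = (norm x)\<^sup>2 + 2 * inner x d + (norm d)\<^sup>2"
    using norm_add_square[of x d] by (simp add: d_def)
  ultimately have "h (x + t *\<^sub>R d) + \<rho> / 2 * ((norm x)\<^sup>2 + 2 * t * inner x d + t\<^sup>2 * (norm d)\<^sup>2)
      \<le> (1 - t) * (h x + \<rho> / 2 * (norm x)\<^sup>2)
        + t * (h y + \<rho> / 2 * ((norm x)\<^sup>2 + 2 * inner x d + (norm d)\<^sup>2))"
    by simp
  moreover have "(1 - t) * (h x + \<rho> / 2 * (norm x)\<^sup>2)
        + t * (h y + \<rho> / 2 * ((norm x)\<^sup>2 + 2 * inner x d + (norm d)\<^sup>2))
        - \<rho> / 2 * ((norm x)\<^sup>2 + 2 * t * inner x d + t\<^sup>2 * (norm d)\<^sup>2)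
      = h x + t * (h y - h x) + \<rho> / 2 * (t - t\<^sup>2) * (norm d)\<^sup>2"
    by (simp add: field_simps power2_eq_square)
  ultimately show ?thesis unfolding d_def[symmetric] by argo
qed

text \<open>A regular subgradient of a \<open>\<rho>\<close>-weakly convex function is a global quadratic minorant:
  the first-order inequality holds near \<open>x\<close>, and weak convexity along the segment to \<open>y\<close>
  transports it to \<open>y\<close>.\<close>

lemma weakly_convex_subgradient_ineq:
  fixes h :: "'a::real_inner \<Rightarrow> real"
  assumes wc: "convex_on UNIV (\<lambda>x. h x + \<rho> / 2 * (norm x)\<^sup>2)" and rho: "\<rho> \<ge> 0"
    and v: "v \<in> subdiff h x"
  shows "h y \<ge> h x + inner v (y - x) - \<rho> / 2 * (norm (y - x))\<^sup>2"
proof -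
  define d where "d = y - x"
  have "h x + inner v d - \<rho> / 2 * (norm d)\<^sup>2 \<le> h y + e" if e: "e > 0" for e
  proof (cases "d = 0")
    case True then show ?thesis using e by (simp add: d_def)
  next
    case False
    then have nd: "norm d > 0" by simp
    with e have "e / norm d > 0" by simp
    with v obtain \<delta> where \<delta>: "\<delta> > 0" and hd: "\<And>y'. norm (y' - x) < \<delta> \<Longrightarrow>
        h y' \<ge> h x + inner v (y' - x) - e / norm d * norm (y' - x)"
      unfolding subdiff_def by blast
    define t where "t = min 1 (\<delta> / (2 * norm d))"
    have t0: "t > 0" and t1: "t \<le> 1" using \<delta> nd by (simp_all add: t_def)
    have "t * norm d \<le> \<delta> / (2 * norm d) * norm d"
      by (rule mult_right_mono) (auto simp: t_def)
    also have "\<dots> = \<delta> / 2" using nd by simp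
    finally have "norm (t *\<^sub>R d) < \<delta>" using \<delta> t0 by simp
    then have "h x + t * inner v d - t * e \<le> h (x + t *\<^sub>R d)"
      using hd[of "x + t *\<^sub>R d"] nd by (simp add: abs_of_pos[OF t0] mult.commute)
    moreover have "h (x + t *\<^sub>R d) \<le> h x + t * (h y - h x) + \<rho> / 2 * (t - t\<^sup>2) * (norm d)\<^sup>2"
      using weakly_convex_segment_le[OF wc, of t x y] t0 t1 by (simp add: d_def)
    moreover have "\<rho> / 2 * (t - t\<^sup>2) * (norm d)\<^sup>2 = t * (\<rho> / 2 * (norm d)\<^sup>2) - \<rho> / 2 * t\<^sup>2 * (norm d)\<^sup>2"
      by (simp add: algebra_simps)
    moreover have "\<rho> / 2 * t\<^sup>2 * (norm d)\<^sup>2 \<ge> 0" using rho by simp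
    moreover have "t * (h x + inner v d - \<rho> / 2 * (norm d)\<^sup>2 - e)
        = t * h x + t * inner v d - t * (\<rho> / 2 * (norm d)\<^sup>2) - t * e"
      "t * (h y - h x) = t * h y - t * h x"
      by (simp_all add: algebra_simps)
    ultimately have "t * (h x + inner v d - \<rho> / 2 * (norm d)\<^sup>2 - e) \<le> t * h y"
      by argo
    then show ?thesis using t0 by simp
  qed
  then have "h x + inner v d - \<rho> / 2 * (norm d)\<^sup>2 \<le> h y" by (rule field_le_epsilon)
  then show ?thesis by (simp add: d_def)
qed

lemma convex_on_lower_bound_norm:
  fixes g :: "'a::euclidean_space \<Rightarrow> real"
  assumes cv: "convex_on UNIV g"
  shows "\<exists>m C. C \<ge> 0 \<and> (\<forall>x. g x \<ge> m - C * norm x)"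
proof -
  have cont: "continuous_on UNIV g" using convex_on_continuous[OF _ cv] by simp
  obtain x0 where x0m: "\<And>x. x \<in> cball 0 1 \<Longrightarrow> g x0 \<le> g x"
    using continuous_attains_inf[of "cball (0::'a) 1" g] cont
    by (metis compact_cball continuous_on_subset empty_iff mem_cball_0 norm_zero zero_le_one subset_UNIV)
  define m where "m = g x0"
  have m0: "m \<le> g 0" using x0m[of 0] by (simp add: m_def)
  have "g x \<ge> m - (g 0 - m) * norm x" for x
  proof (cases "norm x \<le> 1")
    case True
    then have "g x \<ge> m" using x0m by (simp add: m_def)
    moreover have "(g 0 - m) * norm x \<ge> 0" using m0 by simp
    ultimately show ?thesis by linarith
  next
    case False
    then have xn0: "x \<noteq> 0" by auto
    define t where "t = 1 / norm x"
    have t0: "t > 0" "t \<le> 1" using False by (auto simp: t_def divide_le_eq)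
    have "g ((1 - t) *\<^sub>R 0 + t *\<^sub>R x) \<le> (1 - t) * g 0 + t * g x"
      using convex_onD[OF cv, of t 0 x] t0 by simp
    moreover have "norm (t *\<^sub>R x) = 1" using False by (auto simp: t_def)
    then have "g (t *\<^sub>R x) \<ge> m" using x0m by (simp add: m_def)
    ultimately have "t * g x \<ge> m - (1 - t) * g 0" by simp
    then have "norm x * (t * g x) \<ge> norm x * (m - (1 - t) * g 0)"
      by (rule mult_left_mono) simp
    moreover have "norm x * t = 1" using xn0 by (simp add: t_def)
    then have "norm x * (t * g x) = g x" "norm x * (m - (1 - t) * g 0) = norm x * m - norm x * g 0 + g 0"
      by (simp_all add: algebra_simps mult.assoc[symmetric])
    ultimately have "g x \<ge> norm x * m - norm x * g 0 + g 0" by simp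
    moreover have "norm x * m - norm x * g 0 + g 0 \<ge> m - (g 0 - m) * norm x"
      using m0 False by (simp add: algebra_simps)
    ultimately show ?thesis by linarith
  qed
  then show ?thesis using m0 by (intro exI[of _ m] exI[of _ "g 0 - m"]) auto
qed

lemma continuous_quadratic_growth_attains_min:
  fixes \<psi> :: "'a::euclidean_space \<Rightarrow> real"
  assumes cont: "continuous_on UNIV \<psi>" and a: "a > 0"
    and lb: "\<And>u. \<psi> u \<ge> m + a * (norm u)\<^sup>2 - b * norm u"
  shows "\<exists>w. \<forall>u. \<psi> w \<le> \<psi> u"
proof -
  define R where "R = max (2 * \<bar>b\<bar> / a) (sqrt (2 * (\<bar>\<psi> 0 - m\<bar> + 1) / a))"
  have R0: "R \<ge> 0" using a by (simp add: R_def le_max_iff_disj)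
  obtain w where wmin: "\<And>u. u \<in> cball 0 R \<Longrightarrow> \<psi> w \<le> \<psi> u"
    using continuous_attains_inf[of "cball (0::'a) R" \<psi>] cont R0
    by (metis compact_cball continuous_on_subset empty_iff mem_cball_0 norm_zero subset_UNIV)
  have "\<psi> w \<le> \<psi> u" for u
  proof (cases "norm u \<le> R")
    case True then show ?thesis using wmin by simp
  next
    case False
    then have uR: "norm u > R" by simp
    have "R \<ge> 2 * \<bar>b\<bar> / a" by (simp add: R_def)
    then have "R * a \<ge> 2 * \<bar>b\<bar>" using a by (simp add: field_simps)
    moreover have "R * a \<le> norm u * a" using uR a by simp
    ultimately have "a * norm u - b \<ge> a * norm u / 2" by (simp add: mult.commute)
    then have s1: "norm u * (a * norm u - b) \<ge> norm u * (a * norm u / 2)"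
      by (rule mult_left_mono) simp
    have "R \<ge> sqrt (2 * (\<bar>\<psi> 0 - m\<bar> + 1) / a)" by (simp add: R_def)
    then have "(norm u)\<^sup>2 \<ge> (sqrt (2 * (\<bar>\<psi> 0 - m\<bar> + 1) / a))\<^sup>2"
      using uR a by (intro power_mono) auto
    also have "(sqrt (2 * (\<bar>\<psi> 0 - m\<bar> + 1) / a))\<^sup>2 = 2 * (\<bar>\<psi> 0 - m\<bar> + 1) / a"
      using a by simp
    finally have "a * (norm u)\<^sup>2 \<ge> 2 * (\<bar>\<psi> 0 - m\<bar> + 1)" using a by (simp add: field_simps)
    then have "norm u * (a * norm u / 2) \<ge> \<bar>\<psi> 0 - m\<bar> + 1"
      by (simp add: power2_eq_square algebra_simps)
    moreover have "norm u * (a * norm u - b) = a * (norm u)\<^sup>2 - b * norm u"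
      by (simp add: algebra_simps power2_eq_square)
    ultimately have "\<psi> u > \<psi> 0" using s1 lb[of u] by (smt (verit))
    moreover have "\<psi> w \<le> \<psi> 0" using wmin R0 by simp
    ultimately show ?thesis by simp
  qed
  then show ?thesis by blast
qed

lemma prox_minimizer:
  fixes h :: "'a::euclidean_space \<Rightarrow> real"
  assumes wc: "convex_on UNIV (\<lambda>x. h x + \<rho> / 2 * (norm x)\<^sup>2)"
    and al: "\<alpha> > 0" "\<alpha> * \<rho> < 1"
  shows "h (prox \<alpha> h y) + (norm (prox \<alpha> h y - y))\<^sup>2 / (2 * \<alpha>) \<le> h u + (norm (u - y))\<^sup>2 / (2 * \<alpha>)"
proof -
  define g where "g = (\<lambda>x. h x + \<rho> / 2 * (norm x)\<^sup>2)"
  define \<psi> where "\<psi> = (\<lambda>u. h u + (norm (u - y))\<^sup>2 / (2 * \<alpha>))"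
  have cpsi: "continuous_on UNIV \<psi>"
    unfolding \<psi>_def using weakly_convex_continuous[OF wc] al by (intro continuous_intros) auto
  obtain m C where mC: "\<And>x. g x \<ge> m - C * norm x"
    using convex_on_lower_bound_norm[OF wc[folded g_def]] by blast
  have a0: "1 / (2 * \<alpha>) - \<rho> / 2 > 0" using al by (simp add: field_simps)
  have "\<psi> u \<ge> m + (1 / (2 * \<alpha>) - \<rho> / 2) * (norm u)\<^sup>2 - (C + norm y / \<alpha>) * norm u" for u
  proof -
    have "(norm (u - y))\<^sup>2 \<ge> (norm u)\<^sup>2 - 2 * (norm u * norm y)"
      using norm_diff_square[of u y] norm_cauchy_schwarz[of u y] zero_le_power2[of "norm y"]
      by linarith
    then have "(norm (u - y))\<^sup>2 / (2 * \<alpha>) \<ge> ((norm u)\<^sup>2 - 2 * (norm u * norm y)) / (2 * \<alpha>)"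
      using al by (intro divide_right_mono) auto
    moreover have "((norm u)\<^sup>2 - 2 * (norm u * norm y)) / (2 * \<alpha>)
        = (norm u)\<^sup>2 / (2 * \<alpha>) - norm u * (norm y / \<alpha>)"
      using al by (simp add: field_simps)
    moreover have "(1 / (2 * \<alpha>) - \<rho> / 2) * (norm u)\<^sup>2 - (C + norm y / \<alpha>) * norm u
        = (norm u)\<^sup>2 / (2 * \<alpha>) - \<rho> / 2 * (norm u)\<^sup>2 - C * norm u - norm u * (norm y / \<alpha>)"
      by (simp add: algebra_simps)
    ultimately show ?thesis using mC[of u] unfolding \<psi>_def g_def by linarith
  qed
  then have "\<exists>w. \<forall>u. \<psi> w \<le> \<psi> u" by (rule continuous_quadratic_growth_attains_min[OF cpsi a0])
  then have "\<forall>u. \<psi> (prox \<alpha> h y) \<le> \<psi> u"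
    unfolding prox_def \<psi>_def by (rule someI_ex)
  then show ?thesis by (simp add: \<psi>_def)
qed

lemma prox_subgradient:
  fixes h :: "'a::euclidean_space \<Rightarrow> real"
  assumes wc: "convex_on UNIV (\<lambda>x. h x + \<rho> / 2 * (norm x)\<^sup>2)"
    and al: "\<alpha> > 0" "\<alpha> * \<rho> < 1"
  shows "(1 / \<alpha>) *\<^sub>R (y - prox \<alpha> h y) \<in> subdiff h (prox \<alpha> h y)"
proof -
  define w where "w = prox \<alpha> h y"
  have key: "h u \<ge> h w + inner ((1 / \<alpha>) *\<^sub>R (y - w)) (u - w) - (norm (u - w))\<^sup>2 / (2 * \<alpha>)" for u
  proof -
    have "(norm (u - y))\<^sup>2 = (norm (u - w))\<^sup>2 + 2 * inner (u - w) (w - y) + (norm (w - y))\<^sup>2"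
      using norm_add_square[of "u - w" "w - y"] by simp
    then have "(norm (u - y))\<^sup>2 / (2 * \<alpha>)
        = ((norm (u - w))\<^sup>2 + 2 * inner (u - w) (w - y) + (norm (w - y))\<^sup>2) / (2 * \<alpha>)"
      by simp
    also have "\<dots> = (norm (u - w))\<^sup>2 / (2 * \<alpha>) - inner ((1 / \<alpha>) *\<^sub>R (y - w)) (u - w)
        + (norm (w - y))\<^sup>2 / (2 * \<alpha>)"
      using al by (simp add: field_simps inner_commute inner_diff_left inner_diff_right)
    finally have "(norm (u - y))\<^sup>2 / (2 * \<alpha>) = (norm (u - w))\<^sup>2 / (2 * \<alpha>)
        - inner ((1 / \<alpha>) *\<^sub>R (y - w)) (u - w) + (norm (w - y))\<^sup>2 / (2 * \<alpha>)" .
    with prox_minimizer[OF wc al, of y u] show ?thesis by (simp add: w_def)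
  qed
  show ?thesis unfolding subdiff_def w_def[symmetric]
  proof (intro CollectI allI impI)
    fix e :: real assume e: "e > 0"
    show "\<exists>\<delta>>0. \<forall>u. norm (u - w) < \<delta> \<longrightarrow>
      h w + inner ((1 / \<alpha>) *\<^sub>R (y - w)) (u - w) - e * norm (u - w) \<le> h u"
    proof (intro exI[of _ "2 * \<alpha> * e"] conjI allI impI)
      show "2 * \<alpha> * e > 0" using al e by simp
      fix u assume u: "norm (u - w) < 2 * \<alpha> * e"
      have "(norm (u - w))\<^sup>2 \<le> norm (u - w) * (2 * \<alpha> * e)"
        unfolding power2_eq_square using u by (intro mult_left_mono) auto
      then have "(norm (u - w))\<^sup>2 / (2 * \<alpha>) \<le> e * norm (u - w)"
        using al by (simp add: field_simps)
      with key[of u] show "h w + inner ((1 / \<alpha>) *\<^sub>R (y - w)) (u - w) - e * norm (u - w) \<le> h u"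
        by simp
    qed
  qed
qed

lemma prox_lipschitz:
  fixes h :: "'a::euclidean_space \<Rightarrow> real"
  assumes wc: "convex_on UNIV (\<lambda>x. h x + \<rho> / 2 * (norm x)\<^sup>2)" and rho: "\<rho> \<ge> 0"
    and al: "\<alpha> > 0" "\<alpha> * \<rho> < 1"
  shows "(1 - \<alpha> * \<rho>) * norm (prox \<alpha> h y1 - prox \<alpha> h y2) \<le> norm (y1 - y2)"
proof -
  define w1 where "w1 = prox \<alpha> h y1"
  define w2 where "w2 = prox \<alpha> h y2"
  have i1: "h w2 \<ge> h w1 + inner ((1 / \<alpha>) *\<^sub>R (y1 - w1)) (w2 - w1) - \<rho> / 2 * (norm (w2 - w1))\<^sup>2"
    using weakly_convex_subgradient_ineq[OF wc rho prox_subgradient[OF wc al]] by (simp add: w1_def)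
  have i2: "h w1 \<ge> h w2 + inner ((1 / \<alpha>) *\<^sub>R (y2 - w2)) (w1 - w2) - \<rho> / 2 * (norm (w1 - w2))\<^sup>2"
    using weakly_convex_subgradient_ineq[OF wc rho prox_subgradient[OF wc al]] by (simp add: w2_def)
  have "inner ((1 / \<alpha>) *\<^sub>R (y1 - w1)) (w2 - w1) + inner ((1 / \<alpha>) *\<^sub>R (y2 - w2)) (w1 - w2)
      = - (1 / \<alpha>) * inner ((y1 - y2) - (w1 - w2)) (w1 - w2)"
    by (simp add: inner_diff_left inner_diff_right algebra_simps inner_commute)
  also have "inner ((y1 - y2) - (w1 - w2)) (w1 - w2) = inner (y1 - y2) (w1 - w2) - (norm (w1 - w2))\<^sup>2"
    by (simp add: inner_diff_left power2_norm_eq_inner)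
  finally have "inner ((1 / \<alpha>) *\<^sub>R (y1 - w1)) (w2 - w1) + inner ((1 / \<alpha>) *\<^sub>R (y2 - w2)) (w1 - w2)
      = - ((1 / \<alpha>) * (inner (y1 - y2) (w1 - w2) - (norm (w1 - w2))\<^sup>2))" by simp
  moreover have "\<rho> / 2 * (norm (w1 - w2))\<^sup>2 + \<rho> / 2 * (norm (w1 - w2))\<^sup>2 = \<rho> * (norm (w1 - w2))\<^sup>2"
    by simp
  ultimately have "(1 / \<alpha>) * (inner (y1 - y2) (w1 - w2) - (norm (w1 - w2))\<^sup>2) \<ge> - \<rho> * (norm (w1 - w2))\<^sup>2"
    using i1[unfolded norm_minus_commute[of w2 w1]] i2 by linarith
  then have "inner (y1 - y2) (w1 - w2) - (norm (w1 - w2))\<^sup>2 \<ge> - \<alpha> * \<rho> * (norm (w1 - w2))\<^sup>2"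
    using al by (simp add: field_simps)
  then have "(1 - \<alpha> * \<rho>) * (norm (w1 - w2))\<^sup>2 \<le> inner (y1 - y2) (w1 - w2)"
    by (simp add: algebra_simps)
  also have "\<dots> \<le> norm (y1 - y2) * norm (w1 - w2)" by (rule norm_cauchy_schwarz)
  finally have "((1 - \<alpha> * \<rho>) * norm (w1 - w2)) * norm (w1 - w2) \<le> norm (y1 - y2) * norm (w1 - w2)"
    by (simp add: power2_eq_square mult.assoc)
  then show ?thesis
    by (cases "norm (w1 - w2) = 0") (auto simp: mult_le_cancel_right w1_def w2_def)
qed

lemma continuous_on_prox:
  fixes h :: "'a::euclidean_space \<Rightarrow> real"
  assumes wc: "convex_on UNIV (\<lambda>x. h x + \<rho> / 2 * (norm x)\<^sup>2)" and rho: "\<rho> \<ge> 0"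
    and al: "\<alpha> > 0" "\<alpha> * \<rho> < 1"
  shows "continuous_on UNIV (prox \<alpha> h)"
proof (rule lipschitz_on_continuous_on)
  have "norm (prox \<alpha> h x - prox \<alpha> h y) \<le> (1 / (1 - \<alpha> * \<rho>)) * norm (x - y)" for x y
    using prox_lipschitz[OF assms, of x y] al by (simp add: field_simps)
  then show "(1 / (1 - \<alpha> * \<rho>))-lipschitz_on UNIV (prox \<alpha> h)"
    using al by (intro lipschitz_onI) (auto simp: dist_norm)
qed

section \<open>Client drift during the local steps\<close>

lemma perturbed_descent_path:
  fixes x H e :: "nat \<Rightarrow> 'a::real_vector"
  assumes x0: "x 0 = z" and step: "\<And>k. x (Suc k) = x k - \<beta> *\<^sub>R (a + H k + e k)"
  shows "x k - z = - \<beta> *\<^sub>R (real k *\<^sub>R a + (\<Sum>j<k. H j + e j))"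
proof (induction k)
  case 0 then show ?case using x0 by simp
next
  case (Suc k)
  have "x (Suc k) - z = (x k - z) - \<beta> *\<^sub>R (a + H k + e k)" using step by simp
  also have "\<dots> = - \<beta> *\<^sub>R (real (Suc k) *\<^sub>R a + (\<Sum>j<Suc k. H j + e j))"
    unfolding Suc by (simp add: algebra_simps scaleR_add_left)
  finally show ?case .
qed

lemma perturbed_descent_drift_le:
  fixes x H e :: "nat \<Rightarrow> 'a::real_inner"
  assumes x0: "x 0 = z" and step: "\<And>k. x (Suc k) = x k - \<beta> *\<^sub>R (a + H k + e k)"
    and HL: "\<And>k. norm (H k) \<le> L * norm (x k - z)" and k: "k < K"
  shows "(norm (x k - z))\<^sup>2 \<le> 5 * \<beta>\<^sup>2 * (real k)\<^sup>2 * (norm a)\<^sup>2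
      + (5/2) * \<beta>\<^sup>2 * real K * L\<^sup>2 * (\<Sum>j<K. (norm (x j - z))\<^sup>2)
      + (5/2) * \<beta>\<^sup>2 * real k * (\<Sum>j<K. (norm (e j))\<^sup>2)"
proof -
  define SP where "SP = (\<Sum>j<K. (norm (x j - z))\<^sup>2)"
  define SE where "SE = (\<Sum>j<K. (norm (e j))\<^sup>2)"
  define Y where "Y = (norm (real k *\<^sub>R a + ((\<Sum>j<k. H j) + (\<Sum>j<k. e j))))\<^sup>2"
  have e0: "(norm (x k - z))\<^sup>2 = \<beta>\<^sup>2 * Y"
    unfolding perturbed_descent_path[OF x0 step] Y_def by (simp add: power_mult_distrib sum.distrib)
  have e1: "Y \<le> (1 + 4) * (norm (real k *\<^sub>R a))\<^sup>2 + (1 + 1/4) * (norm ((\<Sum>j<k. H j) + (\<Sum>j<k. e j)))\<^sup>2"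
    unfolding Y_def by (rule norm_add_square_le) simp
  have e2: "(norm ((\<Sum>j<k. H j) + (\<Sum>j<k. e j)))\<^sup>2
      \<le> (1 + 1) * (norm (\<Sum>j<k. H j))\<^sup>2 + (1 + 1/1) * (norm (\<Sum>j<k. e j))\<^sup>2"
    by (rule norm_add_square_le) simp
  have e3: "(norm (\<Sum>j<k. H j))\<^sup>2 \<le> real K * (L\<^sup>2 * SP)"
  proof -
    have "(\<Sum>j<k. (norm (H j))\<^sup>2) \<le> (\<Sum>j<k. L\<^sup>2 * (norm (x j - z))\<^sup>2)"
      using power_mono[OF HL] by (intro sum_mono) (simp add: power_mult_distrib)
    also have "\<dots> \<le> L\<^sup>2 * SP"
      unfolding SP_def sum_distrib_left[symmetric] using k by (intro mult_left_mono sum_mono2) auto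
    finally have "real k * (\<Sum>j<k. (norm (H j))\<^sup>2) \<le> real K * (L\<^sup>2 * SP)"
      using k by (intro mult_mono) (auto simp: sum_nonneg)
    then show ?thesis using norm_sum_square_le[of "{..<k}" H] by simp
  qed
  have e4: "(norm (\<Sum>j<k. e j))\<^sup>2 \<le> real k * SE"
  proof -
    have "(norm (\<Sum>j<k. e j))\<^sup>2 \<le> real k * (\<Sum>j<k. (norm (e j))\<^sup>2)"
      using norm_sum_square_le[of "{..<k}" e] by simp
    also have "(\<Sum>j<k. (norm (e j))\<^sup>2) \<le> SE"
      unfolding SE_def using k by (intro sum_mono2) auto
    finally show ?thesis by (simp add: mult_left_mono)
  qed
  have "(norm (real k *\<^sub>R a))\<^sup>2 = (real k)\<^sup>2 * (norm a)\<^sup>2" by (simp add: power_mult_distrib)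
  then have "Y \<le> 5 * ((real k)\<^sup>2 * (norm a)\<^sup>2) + (5/2) * (real K * (L\<^sup>2 * SP)) + (5/2) * (real k * SE)"
    using e1 e2 e3 e4 by argo
  then have "\<beta>\<^sup>2 * Y \<le> \<beta>\<^sup>2 * (5 * ((real k)\<^sup>2 * (norm a)\<^sup>2) + (5/2) * (real K * (L\<^sup>2 * SP))
      + (5/2) * (real k * SE))"
    by (rule mult_left_mono) simp
  then show ?thesis unfolding e0 SP_def SE_def by (simp add: algebra_simps)
qed

text \<open>Summing the pointwise bound over \<open>k < K\<close>, the drift appears on both sides; moving it to
  the left gives the factor \<open>1 - 5/2 (\<beta>KL)\<^sup>2\<close>.\<close>

lemma perturbed_descent_total_drift_le:
  fixes x H e :: "nat \<Rightarrow> 'a::real_inner"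
  assumes x0: "x 0 = z" and step: "\<And>k. x (Suc k) = x k - \<beta> *\<^sub>R (a + H k + e k)"
    and HL: "\<And>k. norm (H k) \<le> L * norm (x k - z)"
  shows "(1 - (5/2) * (\<beta> * real K * L)\<^sup>2) * (\<Sum>k<K. (norm (x k - z))\<^sup>2)
     \<le> (5/3) * \<beta>\<^sup>2 * (real K)^3 * (norm a)\<^sup>2 + (5/4) * \<beta>\<^sup>2 * (real K)\<^sup>2 * (\<Sum>j<K. (norm (e j))\<^sup>2)"
proof -
  define SP where "SP = (\<Sum>j<K. (norm (x j - z))\<^sup>2)"
  define SE where "SE = (\<Sum>j<K. (norm (e j))\<^sup>2)"
  have "SP \<le> (\<Sum>k<K. 5 * \<beta>\<^sup>2 * (real k)\<^sup>2 * (norm a)\<^sup>2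
      + (5/2) * \<beta>\<^sup>2 * real K * L\<^sup>2 * SP + (5/2) * \<beta>\<^sup>2 * real k * SE)"
    unfolding SP_def[of] using perturbed_descent_drift_le[OF x0 step HL]
    by (intro sum_mono) (simp add: SP_def SE_def)
  also have "\<dots> = 5 * \<beta>\<^sup>2 * (norm a)\<^sup>2 * (\<Sum>k<K. (real k)\<^sup>2)
      + (5/2) * \<beta>\<^sup>2 * (real K)\<^sup>2 * L\<^sup>2 * SP + (5/2) * \<beta>\<^sup>2 * SE * (\<Sum>k<K. real k)"
    by (simp add: sum.distrib sum_distrib_left sum_distrib_right power2_eq_square algebra_simps)
  finally have s1: "SP \<le> 5 * \<beta>\<^sup>2 * (norm a)\<^sup>2 * (\<Sum>k<K. (real k)\<^sup>2)
      + (5/2) * \<beta>\<^sup>2 * (real K)\<^sup>2 * L\<^sup>2 * SP + (5/2) * \<beta>\<^sup>2 * SE * (\<Sum>k<K. real k)" .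
  have s2: "5 * \<beta>\<^sup>2 * (norm a)\<^sup>2 * (\<Sum>k<K. (real k)\<^sup>2) \<le> 5 * \<beta>\<^sup>2 * (norm a)\<^sup>2 * ((real K)^3 / 3)"
    using three_sum_squares_le_cube[of K] by (intro mult_left_mono) auto
  have s3: "(5/2) * \<beta>\<^sup>2 * SE * (\<Sum>k<K. real k) \<le> (5/2) * \<beta>\<^sup>2 * SE * ((real K)\<^sup>2 / 2)"
    using two_sum_le_square[of K] by (intro mult_left_mono) (auto simp: SE_def sum_nonneg)
  have "(1 - (5/2) * (\<beta> * real K * L)\<^sup>2) * SP = SP - (5/2) * \<beta>\<^sup>2 * (real K)\<^sup>2 * L\<^sup>2 * SP"
    by (simp add: power_mult_distrib algebra_simps)
  also have "\<dots> \<le> 5 * \<beta>\<^sup>2 * (norm a)\<^sup>2 * ((real K)^3 / 3) + (5/2) * \<beta>\<^sup>2 * SE * ((real K)\<^sup>2 / 2)"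
    using s1 s2 s3 by argo
  also have "\<dots> = (5/3) * \<beta>\<^sup>2 * (real K)^3 * (norm a)\<^sup>2 + (5/4) * \<beta>\<^sup>2 * (real K)\<^sup>2 * SE"
    by (simp add: field_simps)
  finally show ?thesis by (simp add: SP_def SE_def)
qed

section \<open>One round of FedCanon\<close>

locale fedcanon_analysis =
  fixes gF :: "nat \<Rightarrow> 'a::euclidean_space \<Rightarrow> 'b \<Rightarrow> 'a"
    and f :: "nat \<Rightarrow> 'a \<Rightarrow> real" and gradf :: "nat \<Rightarrow> 'a \<Rightarrow> 'a" and h :: "'a \<Rightarrow> real"
    and N K B :: nat and L \<rho> \<mu> Bh \<alpha> \<beta> \<phi>star :: real
  assumes N_pos: "N > 0" and K_pos: "K > 0" and B_pos: "B > 0"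
    and L_pos: "L > 0"
    and smooth: "\<forall>i<N. \<forall>x y. f i x - f i y - inner (gradf i y) (x - y) \<le> L / 2 * (norm (x - y))\<^sup>2
                         \<and> norm (gradf i x - gradf i y) \<le> L * norm (x - y)"
    and rho_nonneg: "\<rho> \<ge> 0"
    and weakly_convex: "convex_on UNIV (\<lambda>x. h x + \<rho> / 2 * (norm x)\<^sup>2)"
    and subgrad_bdd: "\<forall>x. \<forall>v\<in>subdiff h x. (norm v)\<^sup>2 \<le> Bh"
    and mu_pos: "\<mu> > 0"
    and alpha_pos: "\<alpha> > 0" and beta_pos: "\<beta> > 0"
    and step_alpha: "\<alpha> * (\<rho> + L) + 4 * \<alpha>\<^sup>2 * L\<^sup>2 \<le> 1 / 2"
    and step_beta: "12 * (6 + 1 / (1 - \<alpha> * \<rho>)\<^sup>2) * \<beta>\<^sup>2 * (real K)\<^sup>2 * L\<^sup>2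
                      \<le> min (1 / 16) (1 - \<alpha> * \<mu> / 4)"
    and PL: "\<forall>x. (norm (Gmap \<alpha> h x ((1 / real N) *\<^sub>R (\<Sum>i<N. gradf i x))))\<^sup>2
                 \<ge> 2 * \<mu> * ((1 / real N) * (\<Sum>i<N. f i x) + h x - \<phi>star)"
    and phistar_le: "\<forall>x. \<phi>star \<le> (1 / real N) * (\<Sum>i<N. f i x) + h x"
begin

definition "grad_mean x = (1 / real N) *\<^sub>R (\<Sum>i<N. gradf i x)"
definition "phi x = (1 / real N) * (\<Sum>i<N. f i x) + h x"
definition "delta = 1 / (1 - \<alpha> * \<rho>)\<^sup>2"
definition "kappa = (\<beta> * real K * L)\<^sup>2"
definition "drift_den = 1 - (5/2) * kappa"
definition "err_weight = (5 + delta) / 2"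
definition "drift_weight = err_weight * kappa / drift_den"

text \<open>Quantities of one round, as functions of the round's samples \<open>s i k b\<close>, the control
  variables \<open>c\<close> and the server iterate \<open>z\<close>; \<open>v\<close> is the paper's \<open>v\<^sub>i\<^sup>t\<close>.\<close>

definition "local_iter s c z i k = xhat gF B \<beta> i (s i) (c i) z k"
definition "sgrad s c z i k = (1 / real B) *\<^sub>R (\<Sum>b<B. gF i (local_iter s c z i k) (s i k b))"
definition "noise s c z i k = sgrad s c z i k - gradf i (local_iter s c z i k)"
definition "v s c z i = (1 / real K) *\<^sub>R (\<Sum>k<K. sgrad s c z i k)"
definition "upd s c z i = Delta gF K B \<beta> i (s i) (c i) z"
definition "upd_mean s c z = (1 / real N) *\<^sub>R (\<Sum>i<N. upd s c z i)"
definition "next_z s c z = prox \<alpha> h (z - \<alpha> *\<^sub>R upd_mean s c z)"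
definition "next_c s c z = (\<lambda>i. c i + upd_mean s c z - upd s c z i)"
definition "Err z c = (1 / real N) * (\<Sum>i<N. (norm (gradf i z + c i - grad_mean z))\<^sup>2)"
definition "Phi z c = phi z - \<phi>star + \<alpha> * Err z c"
definition "avg_noise s c z i = (1 / real K) *\<^sub>R (\<Sum>k<K. noise s c z i k)"
definition "avg_drift s c z i = (1 / real K) *\<^sub>R (\<Sum>k<K. gradf i (local_iter s c z i k) - gradf i z)"
definition "bias s c z i = v s c z i - gradf i z"
definition "bias_sq s c z = (1 / real N) * (\<Sum>i<N. (norm (bias s c z i))\<^sup>2)"
definition "mean_avg_noise_sq s c z = (1 / real N) * (\<Sum>i<N. (norm (avg_noise s c z i))\<^sup>2)"
definition "mean_noise_sq s c z = (1 / real N) * (\<Sum>i<N. (1 / real K) * (\<Sum>k<K. (norm (noise s c z i k))\<^sup>2))"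

lemma local_iter_0: "local_iter s c z i 0 = z"
  by (simp add: local_iter_def)

lemma local_iter_Suc: "local_iter s c z i (Suc k) = local_iter s c z i k - \<beta> *\<^sub>R (sgrad s c z i k + c i)"
  by (simp add: local_iter_def sgrad_def Let_def)

lemma upd_eq: "upd s c z i = v s c z i + c i"
proof -
  have "z - local_iter s c z i k = \<beta> *\<^sub>R (\<Sum>j<k. sgrad s c z i j + c i)" for k
    by (induction k) (simp_all add: local_iter_0 local_iter_Suc algebra_simps)
  then have "upd s c z i = (1 / (\<beta> * real K)) *\<^sub>R (\<beta> *\<^sub>R (\<Sum>j<K. sgrad s c z i j + c i))"
    by (simp add: upd_def Delta_def local_iter_def)
  also have "\<dots> = (1 / real K) *\<^sub>R (\<Sum>j<K. sgrad s c z i j) + c i"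
    using beta_pos K_pos by (simp add: sum.distrib scaleR_add_right sum_constant_scaleR)
  finally show ?thesis by (simp add: v_def)
qed

lemma upd_mean_eq:
  assumes "(\<Sum>i<N. c i) = 0"
  shows "upd_mean s c z = (1 / real N) *\<^sub>R (\<Sum>i<N. v s c z i)"
  unfolding upd_mean_def upd_eq using assms by (simp add: sum.distrib)

lemma next_c_eq: "next_c s c z i = upd_mean s c z - v s c z i"
  by (simp add: next_c_def upd_eq)

lemma sum_next_c:
  assumes "(\<Sum>i<N. c i) = 0"
  shows "(\<Sum>i<N. next_c s c z i) = 0"
  using upd_mean_eq[OF assms] N_pos by (simp add: next_c_eq sum_subtractf sum_constant_scaleR)


lemma step_alpha_bounds: "\<alpha> * (\<rho> + L) < 1 / 2" "\<alpha> * \<rho> < 1 / 2" "\<alpha> * \<rho> < 1"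
proof -
  have "4 * \<alpha>\<^sup>2 * L\<^sup>2 > 0" using alpha_pos L_pos by simp
  then show a: "\<alpha> * (\<rho> + L) < 1 / 2" using step_alpha by linarith
  moreover have "\<alpha> * L > 0" using alpha_pos L_pos by simp
  ultimately show "\<alpha> * \<rho> < 1 / 2" by (simp add: distrib_left)
  then show "\<alpha> * \<rho> < 1" by simp
qed

lemma delta_bounds: "delta \<ge> 1" "delta \<le> 4"
proof -
  have a0: "\<alpha> * \<rho> \<ge> 0" using alpha_pos rho_nonneg by simp
  have p: "1 - \<alpha> * \<rho> > 1/2" "1 - \<alpha> * \<rho> \<le> 1" using a0 step_alpha_bounds(2) by auto
  have "(1 - \<alpha> * \<rho>)\<^sup>2 \<le> 1" using p a0 by (simp add: power_le_one)
  moreover have "(1 - \<alpha> * \<rho>)\<^sup>2 > 0" using p by simp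
  ultimately show "delta \<ge> 1" by (simp add: delta_def)
  have "(1/2)\<^sup>2 \<le> (1 - \<alpha> * \<rho>)\<^sup>2" using p by (intro power_mono) auto
  then show "delta \<le> 4" by (simp add: delta_def divide_le_eq power2_eq_square)
qed

lemma kappa_bounds: "12 * (6 + delta) * kappa \<le> 1 / 16" "12 * (6 + delta) * kappa \<le> 1 - \<alpha> * \<mu> / 4"
  "kappa \<ge> 0"
proof -
  have "12 * (6 + delta) * kappa = 12 * (6 + 1 / (1 - \<alpha> * \<rho>)\<^sup>2) * \<beta>\<^sup>2 * (real K)\<^sup>2 * L\<^sup>2"
    by (simp add: delta_def kappa_def power_mult_distrib)
  then show "12 * (6 + delta) * kappa \<le> 1 / 16" "12 * (6 + delta) * kappa \<le> 1 - \<alpha> * \<mu> / 4"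
    using step_beta by auto
  show "kappa \<ge> 0" by (simp add: kappa_def)
qed

lemma drift_den_bounds: "drift_den \<ge> 1 - 5 / 2304" "drift_den > 0"
proof -
  have "12 * 6 * kappa \<le> 12 * (6 + delta) * kappa"
    using delta_bounds kappa_bounds by (intro mult_right_mono) auto
  then have "kappa \<le> 1 / 1152" using kappa_bounds by simp
  then show "drift_den \<ge> 1 - 5 / 2304" "drift_den > 0" by (simp_all add: drift_den_def)
qed

lemma err_weight_bounds: "err_weight \<ge> 3" "err_weight \<le> 9 / 2"
  using delta_bounds by (simp_all add: err_weight_def)

lemma drift_weight_bounds: "drift_weight \<ge> 0" "drift_weight \<le> 1 / 400"
  "(25/3) * drift_weight \<le> 1 - \<alpha> * \<mu> / 4"
proof -
  show "drift_weight \<ge> 0"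
    using drift_den_bounds kappa_bounds err_weight_bounds by (simp add: drift_weight_def)
  have "(6 + delta) * kappa * 192 = 16 * (12 * (6 + delta) * kappa)" by (simp add: algebra_simps)
  then have "(6 + delta) * kappa \<le> 1 / 192" using kappa_bounds(1) by linarith
  then have a: "9 / 10 * ((6 + delta) * kappa) \<le> 9 / 10 * (1 / 192)" by (rule mult_left_mono) simp
  have c: "5 + delta \<le> 9 / 10 * (6 + delta)" using delta_bounds by simp
  have "(5 + delta) * kappa \<le> 9 / 10 * ((6 + delta) * kappa)"
    using mult_right_mono[OF c kappa_bounds(3)] by (simp only: mult.assoc)
  from order_trans[OF this a] have "(5 + delta) * kappa \<le> 9 / 1920" by simp
  moreover have "err_weight * kappa = ((5 + delta) * kappa) / 2" by (simp add: err_weight_def)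
  ultimately have "err_weight * kappa \<le> 9 / 3840" by linarith
  then have "err_weight * kappa \<le> (1 - 5 / 2304) / 400" by simp
  also have "\<dots> \<le> drift_den / 400" using drift_den_bounds by simp
  finally show "drift_weight \<le> 1 / 400"
    using drift_den_bounds by (simp add: drift_weight_def divide_le_eq)
  have "(25/3) * err_weight \<le> 12 * (6 + delta) * (1 - 5 / 2304)"
    using delta_bounds by (simp add: err_weight_def)
  also have "\<dots> \<le> 12 * (6 + delta) * drift_den"
    using drift_den_bounds delta_bounds by (intro mult_left_mono) auto
  finally have "(25/3) * err_weight / drift_den * kappa \<le> 12 * (6 + delta) * kappa"
    using drift_den_bounds kappa_bounds by (intro mult_right_mono) (auto simp: divide_le_eq mult.commute)
  also have "\<dots> \<le> 1 - \<alpha> * \<mu> / 4" by (rule kappa_bounds(2))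
  finally show "(25/3) * drift_weight \<le> 1 - \<alpha> * \<mu> / 4" by (simp add: drift_weight_def)
qed

lemma step_alpha_margin: "1 / (2 * \<alpha>) - (\<rho> + L) / 2 - 2 * \<alpha> * L\<^sup>2 \<ge> 1 / (4 * \<alpha>)"
proof -
  have "4 * \<alpha> * (1 / (2 * \<alpha>) - (\<rho> + L) / 2 - 2 * \<alpha> * L\<^sup>2)
      = 2 - 2 * (\<alpha> * (\<rho> + L) + 4 * \<alpha>\<^sup>2 * L\<^sup>2)"
    using alpha_pos by (simp add: field_simps power2_eq_square)
  also have "\<dots> \<ge> 1" using step_alpha by simp
  finally show ?thesis using alpha_pos by (simp add: divide_le_eq mult.commute mult.left_commute)
qed


lemma gradf_lipschitz: "i < N \<Longrightarrow> norm (gradf i x - gradf i y) \<le> L * norm (x - y)"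
  using smooth by blast

lemma mean_f_le:
  "(1 / real N) * (\<Sum>i<N. f i x)
     \<le> (1 / real N) * (\<Sum>i<N. f i y) + inner (grad_mean y) (x - y) + L / 2 * (norm (x - y))\<^sup>2"
proof -
  have "(\<Sum>i<N. f i x) \<le> (\<Sum>i<N. f i y + inner (gradf i y) (x - y) + L / 2 * (norm (x - y))\<^sup>2)"
  proof (rule sum_mono)
    fix i assume "i \<in> {..<N}"
    then have "f i x - f i y - inner (gradf i y) (x - y) \<le> L / 2 * (norm (x - y))\<^sup>2" using smooth by blast
    then show "f i x \<le> f i y + inner (gradf i y) (x - y) + L / 2 * (norm (x - y))\<^sup>2" by simp
  qed
  also have "\<dots> = (\<Sum>i<N. f i y) + inner (\<Sum>i<N. gradf i y) (x - y) + real N * (L / 2 * (norm (x - y))\<^sup>2)"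
    by (simp add: sum.distrib inner_sum_left)
  finally show ?thesis
    using N_pos by (simp add: grad_mean_def field_simps divide_right_mono)
qed

lemma prox_step_descent:
  fixes z u :: 'a
  defines "z' \<equiv> prox \<alpha> h (z - \<alpha> *\<^sub>R u)"
  shows "phi z' \<le> phi z - (1 / (2 * \<alpha>) - (\<rho> + L) / 2) * (norm (z' - z))\<^sup>2
      + \<alpha> / 2 * (norm (u - grad_mean z))\<^sup>2"
proof -
  define d where "d = z' - z"
  have "h z \<ge> h z' + inner ((1 / \<alpha>) *\<^sub>R ((z - \<alpha> *\<^sub>R u) - z')) (z - z') - \<rho> / 2 * (norm (z - z'))\<^sup>2"
    unfolding z'_def
    by (rule weakly_convex_subgradient_ineq[OF weakly_convex rho_nonneg
          prox_subgradient[OF weakly_convex alpha_pos step_alpha_bounds(3)]])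
  moreover have "(norm (z - z'))\<^sup>2 = (norm d)\<^sup>2" by (simp add: d_def norm_minus_commute)
  ultimately have hz: "h z \<ge> h z' + inner ((1 / \<alpha>) *\<^sub>R ((z - \<alpha> *\<^sub>R u) - z')) (z - z') - \<rho> / 2 * (norm d)\<^sup>2"
    by simp
  have w: "(z - \<alpha> *\<^sub>R u) - z' = -(d + \<alpha> *\<^sub>R u)" "z - z' = - d"
    by (simp_all add: d_def algebra_simps)
  have "inner ((1 / \<alpha>) *\<^sub>R ((z - \<alpha> *\<^sub>R u) - z')) (z - z') = (1 / \<alpha>) * inner (d + \<alpha> *\<^sub>R u) d"
    unfolding w by (simp add: algebra_simps inner_diff_left inner_add_left)
  also have "\<dots> = (1 / \<alpha>) * ((norm d)\<^sup>2 + \<alpha> * inner u d)"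
    by (simp add: inner_add_left power2_norm_eq_inner)
  also have "\<dots> = (norm d)\<^sup>2 / \<alpha> + inner u d" using alpha_pos by (simp add: field_simps)
  finally have i1: "inner ((1 / \<alpha>) *\<^sub>R ((z - \<alpha> *\<^sub>R u) - z')) (z - z') = (norm d)\<^sup>2 / \<alpha> + inner u d" .
  have fs: "(1 / real N) * (\<Sum>i<N. f i z')
      \<le> (1 / real N) * (\<Sum>i<N. f i z) + inner (grad_mean z) d + L / 2 * (norm d)\<^sup>2"
    using mean_f_le[of z' z] by (simp add: d_def)
  have "inner (grad_mean z - u) d \<le> norm (u - grad_mean z) * norm d"
    using norm_cauchy_schwarz[of "grad_mean z - u" d] by (simp add: norm_minus_commute)
  also have "\<dots> \<le> \<alpha> / 2 * (norm (u - grad_mean z))\<^sup>2 + (norm d)\<^sup>2 / (2 * \<alpha>)"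
    using two_mult_le_weighted_squares[OF alpha_pos, of "norm (u - grad_mean z)" "norm d"] by simp
  finally have cs: "inner (grad_mean z - u) d \<le> \<alpha> / 2 * (norm (u - grad_mean z))\<^sup>2 + (norm d)\<^sup>2 / (2 * \<alpha>)" .
  have e3: "inner (grad_mean z - u) d = inner (grad_mean z) d - inner u d" by (simp add: inner_diff_left)
  have e4: "(1 / (2 * \<alpha>) - (\<rho> + L) / 2) * (norm d)\<^sup>2
      = (norm d)\<^sup>2 / (2 * \<alpha>) - \<rho> / 2 * (norm d)\<^sup>2 - L / 2 * (norm d)\<^sup>2"
    by (simp add: field_simps)
  have e5: "(norm d)\<^sup>2 / (2 * \<alpha>) + (norm d)\<^sup>2 / (2 * \<alpha>) = (norm d)\<^sup>2 / \<alpha>" by (simp add: field_simps)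
  show ?thesis unfolding phi_def d_def[symmetric] using hz i1 fs cs e3 e4 e5 by argo
qed

lemma bias_eq: "bias s c z i = avg_noise s c z i + avg_drift s c z i"
proof -
  have "v s c z i = (1 / real K) *\<^sub>R (\<Sum>k<K. noise s c z i k + gradf i (local_iter s c z i k))"
    by (simp add: v_def noise_def)
  also have "\<dots> = avg_noise s c z i + avg_drift s c z i + gradf i z"
    using K_pos by (simp add: avg_noise_def avg_drift_def sum.distrib sum_subtractf sum_constant_scaleR
        algebra_simps scaleR_diff_right)
  finally show ?thesis by (simp add: bias_def)
qed

lemma upd_mean_error_le:
  assumes "(\<Sum>i<N. c i) = 0"
  shows "(norm (upd_mean s c z - grad_mean z))\<^sup>2 \<le> bias_sq s c z"
proof -
  have "upd_mean s c z - grad_mean z = (1 / real N) *\<^sub>R (\<Sum>i<N. bias s c z i)"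
    unfolding upd_mean_eq[OF assms] grad_mean_def bias_def by (simp add: sum_subtractf scaleR_diff_right)
  then show ?thesis unfolding bias_sq_def by (simp only: norm_mean_square_le[OF N_pos])
qed

text \<open>The control variables make \<open>\<nabla>f\<^sub>i(z') + c'\<^sub>i - \<nabla>f(z')\<close> the deviation from the mean of
  \<open>\<nabla>f\<^sub>i(z') - v\<^sub>i\<close>, so the new error is controlled by the step length and the bias.\<close>

lemma Err_next_le:
  assumes "(\<Sum>i<N. c i) = 0"
  shows "Err (next_z s c z) (next_c s c z) \<le> 2 * L\<^sup>2 * (norm (next_z s c z - z))\<^sup>2 + 2 * bias_sq s c z"
proof -
  define z' where "z' = next_z s c z"
  define q where "q i = gradf i z' - v s c z i" for i
  have avgq: "(1 / real N) *\<^sub>R (\<Sum>j<N. q j) = grad_mean z' - upd_mean s c z"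
    unfolding q_def upd_mean_eq[OF assms] grad_mean_def by (simp add: sum_subtractf scaleR_diff_right)
  have "Err z' (next_c s c z) = (1 / real N) * (\<Sum>i<N. (norm (q i - (1 / real N) *\<^sub>R (\<Sum>j<N. q j)))\<^sup>2)"
    unfolding Err_def avgq by (simp add: next_c_eq q_def algebra_simps)
  also have "\<dots> \<le> (1 / real N) * (\<Sum>i<N. (norm (q i))\<^sup>2)"
    by (rule mean_norm_square_deviation_le[OF N_pos])
  also have "\<dots> \<le> (1 / real N) * (\<Sum>i<N. 2 * L\<^sup>2 * (norm (z' - z))\<^sup>2 + 2 * (norm (bias s c z i))\<^sup>2)"
  proof (intro mult_left_mono sum_mono)
    fix i assume i: "i \<in> {..<N}"
    have "q i = (gradf i z' - gradf i z) + (- bias s c z i)" by (simp add: q_def bias_def)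
    then have "(norm (q i))\<^sup>2 \<le> (1 + 1) * (norm (gradf i z' - gradf i z))\<^sup>2 + (1 + 1/1) * (norm (- bias s c z i))\<^sup>2"
      using norm_add_square_le[of 1 "gradf i z' - gradf i z" "- bias s c z i"] by simp
    moreover have "(norm (gradf i z' - gradf i z))\<^sup>2 \<le> (L * norm (z' - z))\<^sup>2"
      using gradf_lipschitz[of i z' z] i by (intro power_mono) auto
    ultimately show "(norm (q i))\<^sup>2 \<le> 2 * L\<^sup>2 * (norm (z' - z))\<^sup>2 + 2 * (norm (bias s c z i))\<^sup>2"
      by (simp add: power_mult_distrib)
  qed simp
  also have "\<dots> = 2 * L\<^sup>2 * (norm (z' - z))\<^sup>2 + 2 * bias_sq s c z"
    using N_pos by (simp add: sum.distrib bias_sq_def sum_distrib_left[symmetric] field_simps)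
  finally show ?thesis by (simp add: z'_def)
qed

lemma bias_sq_le:
  "bias_sq s c z \<le> (5/4) * mean_avg_noise_sq s c z + 5 * ((1 / real N) * (\<Sum>i<N. (norm (avg_drift s c z i))\<^sup>2))"
proof -
  have "(\<Sum>i<N. (norm (bias s c z i))\<^sup>2)
      \<le> (\<Sum>i<N. (1 + 1/4) * (norm (avg_noise s c z i))\<^sup>2 + (1 + 1 / (1/4)) * (norm (avg_drift s c z i))\<^sup>2)"
    unfolding bias_eq by (intro sum_mono norm_add_square_le) simp
  also have "\<dots> = (5/4) * (\<Sum>i<N. (norm (avg_noise s c z i))\<^sup>2) + 5 * (\<Sum>i<N. (norm (avg_drift s c z i))\<^sup>2)"
    by (simp add: sum.distrib sum_distrib_left)
  finally show ?thesis
    using N_pos unfolding bias_sq_def mean_avg_noise_sq_def by (simp add: field_simps divide_right_mono)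
qed

lemma avg_drift_le:
  assumes i: "i < N"
  shows "drift_den * (norm (avg_drift s c z i))\<^sup>2 \<le> (5/3) * kappa * (norm (gradf i z + c i))\<^sup>2
     + (5/4) * kappa * ((1 / real K) * (\<Sum>k<K. (norm (noise s c z i k))\<^sup>2))"
proof -
  define x where "x k = local_iter s c z i k" for k
  define H where "H k = gradf i (x k) - gradf i z" for k
  have x0: "x 0 = z" by (simp add: x_def local_iter_0)
  have step: "x (Suc k) = x k - \<beta> *\<^sub>R ((gradf i z + c i) + H k + noise s c z i k)" for k
    by (simp add: x_def H_def local_iter_Suc noise_def algebra_simps)
  have HL: "norm (H k) \<le> L * norm (x k - z)" for k
    using gradf_lipschitz[OF i] by (simp add: H_def)
  have "(norm (avg_drift s c z i))\<^sup>2 \<le> (1 / real K) * (\<Sum>k<K. (norm (H k))\<^sup>2)"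
    unfolding avg_drift_def H_def x_def by (rule norm_mean_square_le[OF K_pos])
  also have "(\<Sum>k<K. (norm (H k))\<^sup>2) \<le> (\<Sum>k<K. L\<^sup>2 * (norm (x k - z))\<^sup>2)"
    by (intro sum_mono) (use power_mono[OF HL] in \<open>simp add: power_mult_distrib\<close>)
  finally have dd: "(norm (avg_drift s c z i))\<^sup>2 \<le> L\<^sup>2 / real K * (\<Sum>k<K. (norm (x k - z))\<^sup>2)"
    using K_pos by (simp add: sum_distrib_left[symmetric] field_simps divide_right_mono)
  have "drift_den * (norm (avg_drift s c z i))\<^sup>2
      \<le> L\<^sup>2 / real K * ((1 - (5/2) * (\<beta> * real K * L)\<^sup>2) * (\<Sum>k<K. (norm (x k - z))\<^sup>2))"
    using mult_left_mono[OF dd, of drift_den] drift_den_bounds by (simp add: drift_den_def kappa_def mult_ac)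
  also have "\<dots> \<le> L\<^sup>2 / real K * ((5/3) * \<beta>\<^sup>2 * (real K)^3 * (norm (gradf i z + c i))\<^sup>2
      + (5/4) * \<beta>\<^sup>2 * (real K)\<^sup>2 * (\<Sum>j<K. (norm (noise s c z i j))\<^sup>2))"
    using perturbed_descent_total_drift_le[OF x0 step HL] by (intro mult_left_mono) auto
  also have "\<dots> = (5/3) * kappa * (norm (gradf i z + c i))\<^sup>2
      + (5/4) * kappa * ((1 / real K) * (\<Sum>k<K. (norm (noise s c z i k))\<^sup>2))"
    using K_pos by (simp add: kappa_def power_mult_distrib field_simps power3_eq_cube power2_eq_square)
  finally show ?thesis .
qed

lemma mean_avg_drift_le:
  "drift_den * ((1 / real N) * (\<Sum>i<N. (norm (avg_drift s c z i))\<^sup>2))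
     \<le> (5/3) * kappa * ((1 / real N) * (\<Sum>i<N. (norm (gradf i z + c i))\<^sup>2))
       + (5/4) * kappa * mean_noise_sq s c z"
proof -
  have "drift_den * ((1 / real N) * (\<Sum>i<N. (norm (avg_drift s c z i))\<^sup>2))
      = (1 / real N) * (\<Sum>i<N. drift_den * (norm (avg_drift s c z i))\<^sup>2)"
    by (simp add: sum_distrib_left)
  also have "\<dots> \<le> (1 / real N) * (\<Sum>i<N. (5/3) * kappa * (norm (gradf i z + c i))\<^sup>2
      + (5/4) * kappa * ((1 / real K) * (\<Sum>k<K. (norm (noise s c z i k))\<^sup>2)))"
    using avg_drift_le by (intro mult_left_mono sum_mono) auto
  also have "\<dots> = (5/3) * kappa * ((1 / real N) * (\<Sum>i<N. (norm (gradf i z + c i))\<^sup>2))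
       + (5/4) * kappa * mean_noise_sq s c z"
    unfolding mean_noise_sq_def by (simp add: sum.distrib sum_distrib_left algebra_simps)
  finally show ?thesis .
qed

lemma mean_sq_corrected_grad_eq:
  assumes "(\<Sum>i<N. c i) = 0"
  shows "(1 / real N) * (\<Sum>i<N. (norm (gradf i z + c i))\<^sup>2) = Err z c + (norm (grad_mean z))\<^sup>2"
proof -
  have "(1 / real N) *\<^sub>R (\<Sum>j<N. gradf j z + c j) = grad_mean z"
    using assms by (simp add: grad_mean_def sum.distrib)
  then show ?thesis
    using sum_norm_square_mean_decomp[OF N_pos, of "\<lambda>i. gradf i z + c i"] N_pos unfolding Err_def
    by (simp add: field_simps)
qed

text \<open>\<open>G\<^sup>\<alpha>(z) - \<nabla>f(z)\<close> is a subgradient of \<open>h\<close> at the prox point, hence bounded by \<open>B\<^sub>h\<close>.\<close>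

lemma grad_mean_sq_le_gmap:
  "(norm (grad_mean z))\<^sup>2 \<le> (3/2) * (norm (Gmap \<alpha> h z (grad_mean z)))\<^sup>2 + 3 * Bh"
proof -
  define G where "G = Gmap \<alpha> h z (grad_mean z)"
  define p where "p = prox \<alpha> h (z - \<alpha> *\<^sub>R grad_mean z)"
  have "(1 / \<alpha>) *\<^sub>R ((z - \<alpha> *\<^sub>R grad_mean z) - p) \<in> subdiff h p"
    unfolding p_def by (rule prox_subgradient[OF weakly_convex alpha_pos step_alpha_bounds(3)])
  moreover have "(1 / \<alpha>) *\<^sub>R ((z - \<alpha> *\<^sub>R grad_mean z) - p) = G - grad_mean z"
    using alpha_pos by (simp add: G_def Gmap_def p_def algebra_simps)
  ultimately have "(norm (G - grad_mean z))\<^sup>2 \<le> Bh" using subgrad_bdd by auto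
  moreover have "(norm (G + (- (G - grad_mean z))))\<^sup>2
      \<le> (1 + 1/2) * (norm G)\<^sup>2 + (1 + 1 / (1/2)) * (norm (- (G - grad_mean z)))\<^sup>2"
    by (rule norm_add_square_le) simp
  ultimately show ?thesis by (simp add: G_def norm_minus_commute)
qed

lemma gmap_sq_le_step:
  "\<alpha>\<^sup>2 * (norm (Gmap \<alpha> h z (grad_mean z)))\<^sup>2
     \<le> (3/2) * (norm (prox \<alpha> h (z - \<alpha> *\<^sub>R u) - z))\<^sup>2 + 3 * delta * \<alpha>\<^sup>2 * (norm (u - grad_mean z))\<^sup>2"
proof -
  define p where "p = prox \<alpha> h (z - \<alpha> *\<^sub>R grad_mean z)"
  define z' where "z' = prox \<alpha> h (z - \<alpha> *\<^sub>R u)"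
  have pos: "1 - \<alpha> * \<rho> > 0" using step_alpha_bounds by simp
  have "(1 - \<alpha> * \<rho>) * norm (z' - p) \<le> norm ((z - \<alpha> *\<^sub>R u) - (z - \<alpha> *\<^sub>R grad_mean z))"
    unfolding z'_def p_def
    by (rule prox_lipschitz[OF weakly_convex rho_nonneg alpha_pos step_alpha_bounds(3)])
  also have "\<dots> = \<alpha> * norm (u - grad_mean z)"
    using alpha_pos by (simp add: norm_minus_commute scaleR_diff_right[symmetric])
  finally have "((1 - \<alpha> * \<rho>) * norm (z' - p))\<^sup>2 \<le> (\<alpha> * norm (u - grad_mean z))\<^sup>2"
    using pos by (intro power_mono) auto
  then have "(1 - \<alpha> * \<rho>)\<^sup>2 * (norm (z' - p))\<^sup>2 \<le> \<alpha>\<^sup>2 * (norm (u - grad_mean z))\<^sup>2"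
    by (simp add: power_mult_distrib)
  then have "delta * ((1 - \<alpha> * \<rho>)\<^sup>2 * (norm (z' - p))\<^sup>2) \<le> delta * (\<alpha>\<^sup>2 * (norm (u - grad_mean z))\<^sup>2)"
    using delta_bounds by (intro mult_left_mono) auto
  then have zp: "(norm (z' - p))\<^sup>2 \<le> delta * \<alpha>\<^sup>2 * (norm (u - grad_mean z))\<^sup>2"
    using pos by (simp add: delta_def mult.assoc)
  have "\<alpha>\<^sup>2 * (norm (Gmap \<alpha> h z (grad_mean z)))\<^sup>2 = (norm ((- (z' - z)) + (z' - p)))\<^sup>2"
    using alpha_pos by (simp add: Gmap_def p_def power_mult_distrib power_divide)
  also have "\<dots> \<le> (1 + 1/2) * (norm (- (z' - z)))\<^sup>2 + (1 + 1/(1/2)) * (norm (z' - p))\<^sup>2"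
    by (rule norm_add_square_le) simp
  finally show ?thesis using zp by (simp add: z'_def norm_minus_commute)
qed


lemma Phi_next_le_bias_sq:
  assumes c0: "(\<Sum>i<N. c i) = 0"
  shows "Phi (next_z s c z) (next_c s c z) \<le> phi z - \<phi>star
     - \<alpha> / 6 * (norm (Gmap \<alpha> h z (grad_mean z)))\<^sup>2 + \<alpha> * (err_weight * bias_sq s c z)"
proof -
  define z' where "z' = next_z s c z"
  define D2 where "D2 = (norm (z' - z))\<^sup>2"
  define e2 where "e2 = (norm (upd_mean s c z - grad_mean z))\<^sup>2"
  define W where "W = bias_sq s c z"
  define Gs where "Gs = (norm (Gmap \<alpha> h z (grad_mean z)))\<^sup>2"
  define c1 where "c1 = 1 / (2 * \<alpha>) - (\<rho> + L) / 2"
  have al: "\<alpha> > 0" by (rule alpha_pos)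
  have D2: "D2 \<ge> 0" by (simp add: D2_def)
  have T1: "phi z' \<le> phi z - c1 * D2 + \<alpha> / 2 * e2"
    using prox_step_descent unfolding c1_def D2_def e2_def z'_def next_z_def by simp
  have T2: "\<alpha> * Err z' (next_c s c z) \<le> 2 * \<alpha> * L\<^sup>2 * D2 + 2 * (\<alpha> * W)"
    using mult_left_mono[OF Err_next_le[OF c0], of \<alpha>] al
    by (simp add: D2_def W_def z'_def algebra_simps)
  have T3: "c1 * D2 - 2 * \<alpha> * L\<^sup>2 * D2 \<ge> D2 / (4 * \<alpha>)"
    using mult_right_mono[OF step_alpha_margin D2] by (simp add: c1_def algebra_simps)
  have T4: "\<alpha> / 6 * Gs \<le> D2 / (4 * \<alpha>) + delta * \<alpha> / 2 * e2"
  proof -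
    have "\<alpha>\<^sup>2 * Gs / (6 * \<alpha>) \<le> ((3/2) * D2 + 3 * delta * \<alpha>\<^sup>2 * e2) / (6 * \<alpha>)"
      using gmap_sq_le_step[of z "upd_mean s c z"] al
      by (intro divide_right_mono) (auto simp: Gs_def D2_def e2_def z'_def next_z_def)
    moreover have "\<alpha>\<^sup>2 * Gs / (6 * \<alpha>) = \<alpha> / 6 * Gs" using al by (simp add: power2_eq_square)
    moreover have "((3/2) * D2 + 3 * delta * \<alpha>\<^sup>2 * e2) / (6 * \<alpha>) = D2 / (4 * \<alpha>) + delta * \<alpha> / 2 * e2"
      using al by (simp add: field_simps power2_eq_square)
    ultimately show ?thesis by argo
  qed
  have T5: "\<alpha> * ((1 + delta) / 2 * e2) \<le> \<alpha> * ((1 + delta) / 2 * W)"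
    using upd_mean_error_le[OF c0] al delta_bounds by (intro mult_left_mono) (auto simp: e2_def W_def)
  have "\<alpha> * ((1 + delta) / 2 * e2) = delta * \<alpha> / 2 * e2 + \<alpha> / 2 * e2" by (simp add: field_simps)
  moreover have "\<alpha> * ((1 + delta) / 2 * W) + 2 * (\<alpha> * W) = \<alpha> * (err_weight * W)"
    by (simp add: err_weight_def field_simps)
  ultimately have "phi z' - \<phi>star + \<alpha> * Err z' (next_c s c z) \<le> phi z - \<phi>star - \<alpha> / 6 * Gs + \<alpha> * (err_weight * W)"
    using T1 T2 T3 T4 T5 by argo
  then show ?thesis by (simp add: Phi_def z'_def Gs_def W_def)
qed

lemma err_weight_bias_sq_le:
  assumes c0: "(\<Sum>i<N. c i) = 0"
  shows "err_weight * bias_sq s c z \<le> (5/4) * err_weight * mean_avg_noise_sq s c z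
     + (25/4) * drift_weight * mean_noise_sq s c z + 25 * drift_weight * Bh
     + (1 - \<alpha> * \<mu> / 4) * Err z c + 1 / 24 * (norm (Gmap \<alpha> h z (grad_mean z)))\<^sup>2"
proof -
  define Gs where "Gs = (norm (Gmap \<alpha> h z (grad_mean z)))\<^sup>2"
  define Dd where "Dd = (1 / real N) * (\<Sum>i<N. (norm (avg_drift s c z i))\<^sup>2)"
  define A where "A = (1 / real N) * (\<Sum>i<N. (norm (gradf i z + c i))\<^sup>2)"
  define E where "E = Err z c"
  define zq where "zq = mean_noise_sq s c z"
  have Gs: "Gs \<ge> 0" and E: "E \<ge> 0" by (simp_all add: Gs_def E_def Err_def sum_nonneg)
  have H1: "err_weight * bias_sq s c z \<le> (5/4) * err_weight * mean_avg_noise_sq s c z + 5 * (err_weight * Dd)"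
    using mult_left_mono[OF bias_sq_le, of err_weight] err_weight_bounds
    by (simp add: Dd_def algebra_simps)
  have H2: "err_weight * Dd \<le> drift_weight * ((5/3) * A + (5/4) * zq)"
  proof -
    have "Dd \<le> ((5/3) * kappa * A + (5/4) * kappa * zq) / drift_den"
      using mean_avg_drift_le drift_den_bounds by (simp add: Dd_def A_def zq_def le_divide_eq mult.commute)
    then have "err_weight * Dd \<le> err_weight * (((5/3) * kappa * A + (5/4) * kappa * zq) / drift_den)"
      using err_weight_bounds by (intro mult_left_mono) auto
    also have "\<dots> = drift_weight * ((5/3) * A + (5/4) * zq)" by (simp add: drift_weight_def field_simps)
    finally show ?thesis .
  qed
  have H3: "drift_weight * A \<le> drift_weight * (E + (3/2) * Gs + 3 * Bh)"
    using mean_sq_corrected_grad_eq[OF c0] grad_mean_sq_le_gmap drift_weight_bounds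
    by (intro mult_left_mono) (auto simp: A_def E_def Gs_def)
  have H4: "(25/2) * (drift_weight * Gs) \<le> 1 / 24 * Gs"
    using mult_right_mono[OF drift_weight_bounds(2) Gs] Gs by linarith
  have H5: "(25/3) * drift_weight * E \<le> (1 - \<alpha> * \<mu> / 4) * E"
    using drift_weight_bounds E by (intro mult_right_mono) auto
  have "drift_weight * ((5/3) * A + (5/4) * zq) = (5/3) * (drift_weight * A) + (5/4) * (drift_weight * zq)"
    "drift_weight * (E + (3/2) * Gs + 3 * Bh) = drift_weight * E + (3/2) * (drift_weight * Gs) + 3 * (drift_weight * Bh)"
    "(25/3) * drift_weight * E = (25/3) * (drift_weight * E)"
    "(25/4) * drift_weight * zq = (25/4) * (drift_weight * zq)"
    "25 * drift_weight * Bh = 25 * (drift_weight * Bh)"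
    by (simp_all add: algebra_simps)
  then show ?thesis using H1 H2 H3 H4 H5 unfolding E_def[symmetric] Gs_def[symmetric] zq_def[symmetric]
    by argo
qed

theorem Phi_next_le:
  assumes c0: "(\<Sum>i<N. c i) = 0"
  shows "Phi (next_z s c z) (next_c s c z) \<le> (1 - \<alpha> * \<mu> / 4) * Phi z c
     + \<alpha> * ((5/4) * err_weight * mean_avg_noise_sq s c z + (25/4) * drift_weight * mean_noise_sq s c z
       + 25 * drift_weight * Bh)"
proof -
  define Gs where "Gs = (norm (Gmap \<alpha> h z (grad_mean z)))\<^sup>2"
  define P where "P = phi z - \<phi>star"
  define R where "R = (5/4) * err_weight * mean_avg_noise_sq s c z + (25/4) * drift_weight * mean_noise_sq s c z
       + 25 * drift_weight * Bh"
  have "\<alpha> * (err_weight * bias_sq s c z) \<le> \<alpha> * (R + (1 - \<alpha> * \<mu> / 4) * Err z c + 1 / 24 * Gs)"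
    using err_weight_bias_sq_le[OF c0] alpha_pos by (intro mult_left_mono) (auto simp: R_def Gs_def)
  moreover have "\<alpha> / 8 * Gs \<ge> \<alpha> / 8 * (2 * \<mu> * P)"
    using PL alpha_pos by (intro mult_left_mono) (auto simp: Gs_def P_def phi_def grad_mean_def)
  ultimately show ?thesis
    using Phi_next_le_bias_sq[OF c0, of s z]
    unfolding Gs_def[symmetric] P_def[symmetric] R_def[symmetric] Phi_def
    by (simp add: algebra_simps)
qed

end

section \<open>Second moments of sums of fresh zero-mean noise\<close>

lemma nn_integral_norm_add_zero_mean_le:
  fixes e :: "'b \<Rightarrow> 'a::euclidean_space"
  assumes "prob_space D" and em: "e \<in> borel_measurable D" and ei: "integrable D e"
    and e0: "(\<integral> s. e s \<partial>D) = 0"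
    and ev: "(\<integral>\<^sup>+ s. ennreal ((norm (e s))\<^sup>2) \<partial>D) \<le> ennreal S" and S0: "S \<ge> 0"
  shows "(\<integral>\<^sup>+ s. ennreal ((norm (V + w *\<^sub>R e s))\<^sup>2) \<partial>D) \<le> ennreal ((norm V)\<^sup>2 + w\<^sup>2 * S)"
proof -
  interpret prob_space D by fact
  have i2: "integrable D (\<lambda>s. (norm (e s))\<^sup>2)"
  proof (rule integrableI_bounded)
    show "(\<lambda>s. (norm (e s))\<^sup>2) \<in> borel_measurable D" using em by measurable
    show "(\<integral>\<^sup>+ s. ennreal (norm ((norm (e s))\<^sup>2)) \<partial>D) < \<infinity>"
      using ev by (simp add: le_less_trans)
  qed
  have eq: "(norm (V + w *\<^sub>R e s))\<^sup>2 = (norm V)\<^sup>2 + 2 * w * inner V (e s) + w\<^sup>2 * (norm (e s))\<^sup>2" for s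
    by (simp add: norm_add_square power_mult_distrib algebra_simps)
  have ii: "integrable D (\<lambda>s. (norm V)\<^sup>2 + 2 * w * inner V (e s) + w\<^sup>2 * (norm (e s))\<^sup>2)"
    using ei i2 by (intro Bochner_Integration.integrable_add integrable_mult_right integrable_inner_right) auto
  have "(\<integral>\<^sup>+ s. ennreal ((norm (V + w *\<^sub>R e s))\<^sup>2) \<partial>D)
      = ennreal (\<integral> s. (norm V)\<^sup>2 + 2 * w * inner V (e s) + w\<^sup>2 * (norm (e s))\<^sup>2 \<partial>D)"
    unfolding eq using ii by (intro nn_integral_eq_integral) (auto simp: eq[symmetric])
  also have "(\<integral> s. (norm V)\<^sup>2 + 2 * w * inner V (e s) + w\<^sup>2 * (norm (e s))\<^sup>2 \<partial>D)
      = (norm V)\<^sup>2 + w\<^sup>2 * (\<integral> s. (norm (e s))\<^sup>2 \<partial>D)"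
    using i2 ei e0 by (simp add: integral_add integral_mult_right_zero prob_space)
  also have "(\<integral> s. (norm (e s))\<^sup>2 \<partial>D) \<le> S"
  proof -
    have "ennreal (\<integral> s. (norm (e s))\<^sup>2 \<partial>D) = (\<integral>\<^sup>+ s. ennreal ((norm (e s))\<^sup>2) \<partial>D)"
      using i2 by (intro nn_integral_eq_integral[symmetric]) auto
    with ev have "ennreal (\<integral> s. (norm (e s))\<^sup>2 \<partial>D) \<le> ennreal S" by simp
    then show ?thesis using S0 by (simp add: ennreal_le_iff)
  qed
  then have "ennreal ((norm V)\<^sup>2 + w\<^sup>2 * (\<integral> s. (norm (e s))\<^sup>2 \<partial>D)) \<le> ennreal ((norm V)\<^sup>2 + w\<^sup>2 * S)"
    by (intro ennreal_leI add_left_mono mult_left_mono) auto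
  finally show ?thesis .
qed

lemma measurable_fun_upd_PiM:
  assumes "l \<in> I" "s0 \<in> space (Mx l)"
  shows "(\<lambda>x. x(l := s0)) \<in> measurable (PiM (I - {l}) Mx) (PiM I Mx)"
proof (rule measurable_PiM_single')
  show "(\<lambda>x. (x(l := s0)) i) \<in> measurable (PiM (I - {l}) Mx) (Mx i)" if "i \<in> I" for i
    using that assms by (cases "i = l") auto
  show "(\<lambda>x. x(l := s0)) \<in> space (PiM (I - {l}) Mx) \<rightarrow> (\<Pi>\<^sub>E i\<in>I. space (Mx i))"
    using assms by (auto simp: space_PiM PiE_def extensional_def Pi_def)
qed

lemma nn_integral_PiM_fun_upd_const:
  assumes pp: "\<And>l. prob_space (Mx l)" and fin: "finite I" and l: "l \<in> I"
    and s0: "s0 \<in> space (Mx l)"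
    and fm: "f \<in> borel_measurable (PiM I Mx)"
    and fi: "\<And>y s. y \<in> space (PiM I Mx) \<Longrightarrow> s \<in> space (Mx l) \<Longrightarrow> f (y(l := s)) = f y"
  shows "(\<integral>\<^sup>+ x. f (x(l := s0)) \<partial>PiM (I - {l}) Mx) = (\<integral>\<^sup>+ y. f y \<partial>PiM I Mx)"
proof -
  interpret product_prob_space Mx I by (rule product_prob_spaceI[OF pp])
  define J where "J = I - {l}"
  have IJ: "I = insert l J" "l \<notin> J" "finite J" using l fin by (auto simp: J_def)
  have upd: "x(l := s) \<in> space (PiM I Mx)" if "x \<in> space (PiM J Mx)" "s \<in> space (Mx l)" for x s
    using that unfolding IJ(1) space_PiM by (intro PiE_fun_upd) auto
  have "(\<integral>\<^sup>+ x. f (x(l := s0)) \<partial>PiM J Mx) = (\<integral>\<^sup>+ x. (\<integral>\<^sup>+ s. f (x(l := s)) \<partial>Mx l) \<partial>PiM J Mx)"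
  proof (rule nn_integral_cong)
    fix x assume x: "x \<in> space (PiM J Mx)"
    have "(\<integral>\<^sup>+ s. f (x(l := s)) \<partial>Mx l) = (\<integral>\<^sup>+ s. f (x(l := s0)) \<partial>Mx l)"
      using fi[OF upd[OF x s0]] by (intro nn_integral_cong) simp
    then show "f (x(l := s0)) = (\<integral>\<^sup>+ s. f (x(l := s)) \<partial>Mx l)" by (simp add: M.emeasure_space_1)
  qed
  also have "\<dots> = (\<integral>\<^sup>+ y. f y \<partial>PiM I Mx)"
    using fm unfolding IJ(1) by (subst product_nn_integral_insert) (use IJ in auto)
  finally show ?thesis by (simp add: J_def)
qed

text \<open>The key independence step: if \<open>V\<close> and \<open>X\<close> do not depend on coordinate \<open>l\<close> of the
  product space, integrating out \<open>y l\<close> first shows that adding the noise \<open>G (X y) (y l)\<close>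
  costs at most its variance bound \<open>c\<close>.\<close>

lemma nn_integral_PiM_norm_add_fresh_le:
  fixes V X :: "('l \<Rightarrow> 'b) \<Rightarrow> 'a::euclidean_space" and G :: "'a \<Rightarrow> 'b \<Rightarrow> 'a"
  assumes pp: "\<And>l. prob_space (Mx l)" and fin: "finite I" and l: "l \<in> I"
    and Vm: "V \<in> borel_measurable (PiM I Mx)" and Xm: "X \<in> borel_measurable (PiM I Mx)"
    and Vi: "\<And>y s. y \<in> space (PiM I Mx) \<Longrightarrow> s \<in> space (Mx l) \<Longrightarrow> V (y(l := s)) = V y"
    and Xi: "\<And>y s. y \<in> space (PiM I Mx) \<Longrightarrow> s \<in> space (Mx l) \<Longrightarrow> X (y(l := s)) = X y"
    and Gm: "(\<lambda>(x, s). G x s) \<in> borel_measurable (borel \<Otimes>\<^sub>M Mx l)"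
    and G2: "\<And>x v. (\<integral>\<^sup>+ s. ennreal ((norm (v + G x s))\<^sup>2) \<partial>Mx l) \<le> ennreal ((norm v)\<^sup>2 + c)"
    and c0: "c \<ge> 0"
  shows "(\<integral>\<^sup>+ y. ennreal ((norm (V y + G (X y) (y l)))\<^sup>2) \<partial>PiM I Mx)
      \<le> (\<integral>\<^sup>+ y. ennreal ((norm (V y))\<^sup>2) \<partial>PiM I Mx) + ennreal c"
proof -
  interpret product_prob_space Mx I by (rule product_prob_spaceI[OF pp])
  define J where "J = I - {l}"
  have IJ: "I = insert l J" "l \<notin> J" "finite J" using l fin by (auto simp: J_def)
  interpret PJ: prob_space "PiM J Mx" by (rule prob_space_PiM) (use pp in auto)
  obtain s0 where s0: "s0 \<in> space (Mx l)" using M.not_empty[of l] by blast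
  have upd: "x(l := s) \<in> space (PiM I Mx)" if "x \<in> space (PiM J Mx)" "s \<in> space (Mx l)" for x s
    using that unfolding IJ(1) space_PiM by (intro PiE_fun_upd) auto
  have "(\<lambda>y. (X y, y l)) \<in> measurable (PiM I Mx) (borel \<Otimes>\<^sub>M Mx l)"
    using Xm l by measurable
  then have "(\<lambda>y. (\<lambda>(x, s). G x s) (X y, y l)) \<in> borel_measurable (PiM I Mx)"
    using Gm by (rule measurable_compose)
  then have Hm: "(\<lambda>y. ennreal ((norm (V y + G (X y) (y l)))\<^sup>2)) \<in> borel_measurable (PiM I Mx)"
    using Vm by simp
  have Vm2: "(\<lambda>y. ennreal ((norm (V y))\<^sup>2)) \<in> borel_measurable (PiM I Mx)" using Vm by measurable
  have "(\<integral>\<^sup>+ y. ennreal ((norm (V y + G (X y) (y l)))\<^sup>2) \<partial>PiM I Mx)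
     = (\<integral>\<^sup>+ x. (\<integral>\<^sup>+ s. ennreal ((norm (V (x(l := s)) + G (X (x(l := s))) s))\<^sup>2) \<partial>Mx l) \<partial>PiM J Mx)"
    using Hm unfolding IJ(1) by (subst product_nn_integral_insert) (use IJ in auto)
  also have "\<dots> \<le> (\<integral>\<^sup>+ x. ennreal ((norm (V (x(l := s0))))\<^sup>2) + ennreal c \<partial>PiM J Mx)"
  proof (rule nn_integral_mono)
    fix x assume x: "x \<in> space (PiM J Mx)"
    have "(\<integral>\<^sup>+ s. ennreal ((norm (V (x(l := s)) + G (X (x(l := s))) s))\<^sup>2) \<partial>Mx l)
        = (\<integral>\<^sup>+ s. ennreal ((norm (V (x(l := s0)) + G (X (x(l := s0))) s))\<^sup>2) \<partial>Mx l)"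
      using Vi[OF upd[OF x s0]] Xi[OF upd[OF x s0]] by (intro nn_integral_cong) simp
    also have "\<dots> \<le> ennreal ((norm (V (x(l := s0))))\<^sup>2) + ennreal c"
      using G2 c0 by (simp add: ennreal_plus)
    finally show "(\<integral>\<^sup>+ s. ennreal ((norm (V (x(l := s)) + G (X (x(l := s))) s))\<^sup>2) \<partial>Mx l)
        \<le> ennreal ((norm (V (x(l := s0))))\<^sup>2) + ennreal c" .
  qed
  also have "\<dots> = (\<integral>\<^sup>+ x. ennreal ((norm (V (x(l := s0))))\<^sup>2) \<partial>PiM J Mx) + ennreal c"
    using measurable_compose[OF measurable_fun_upd_PiM[where Mx=Mx, OF l s0] Vm2, folded J_def]
    by (subst nn_integral_add) (auto simp: PJ.emeasure_space_1)
  also have "(\<integral>\<^sup>+ x. ennreal ((norm (V (x(l := s0))))\<^sup>2) \<partial>PiM J Mx) = (\<integral>\<^sup>+ y. ennreal ((norm (V y))\<^sup>2) \<partial>PiM I Mx)"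
    unfolding J_def using Vi by (intro nn_integral_PiM_fun_upd_const[OF pp fin l s0 Vm2]) simp
  finally show ?thesis .
qed

lemma nn_integral_mean_le:
  fixes f :: "nat \<Rightarrow> 'x \<Rightarrow> real"
  assumes n: "n > 0" and fm: "\<And>i. i < n \<Longrightarrow> f i \<in> borel_measurable M"
    and f0: "\<And>i y. f i y \<ge> 0"
    and fb: "\<And>i. i < n \<Longrightarrow> (\<integral>\<^sup>+ y. ennreal (f i y) \<partial>M) \<le> ennreal c"
    and c0: "c \<ge> 0"
  shows "(\<integral>\<^sup>+ y. ennreal ((1 / real n) * (\<Sum>i<n. f i y)) \<partial>M) \<le> ennreal c"
proof -
  have "(\<integral>\<^sup>+ y. ennreal ((1 / real n) * (\<Sum>i<n. f i y)) \<partial>M)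
      = (\<integral>\<^sup>+ y. ennreal (1 / real n) * (\<Sum>i<n. ennreal (f i y)) \<partial>M)"
  proof (intro nn_integral_cong)
    fix y
    have "ennreal ((1 / real n) * (\<Sum>i<n. f i y)) = ennreal (1 / real n) * ennreal (\<Sum>i<n. f i y)"
      using f0 by (intro ennreal_mult) (auto simp: sum_nonneg)
    then show "ennreal ((1 / real n) * (\<Sum>i<n. f i y)) = ennreal (1 / real n) * (\<Sum>i<n. ennreal (f i y))"
      using f0 by simp
  qed
  also have "\<dots> = ennreal (1 / real n) * (\<Sum>i<n. (\<integral>\<^sup>+ y. ennreal (f i y) \<partial>M))"
  proof -
    have "(\<lambda>y. (\<Sum>i<n. ennreal (f i y))) \<in> borel_measurable M" using fm by measurable
    moreover have "(\<integral>\<^sup>+ y. (\<Sum>i<n. ennreal (f i y)) \<partial>M) = (\<Sum>i<n. (\<integral>\<^sup>+ y. ennreal (f i y) \<partial>M))"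
      using fm by (intro nn_integral_sum) auto
    ultimately show ?thesis by (simp add: nn_integral_cmult)
  qed
  also have "\<dots> \<le> ennreal (1 / real n) * (\<Sum>i<n. ennreal c)"
    using fb by (intro mult_left_mono sum_mono) auto
  also have "\<dots> = ennreal c"
    using n c0 by (simp add: ennreal_mult[symmetric] ennreal_of_nat_eq_real_of_nat)
  finally show ?thesis .
qed

lemma ennreal_linear_recurrence_le:
  fixes u :: "nat \<Rightarrow> ennreal"
  assumes step: "\<And>t. t < T \<Longrightarrow> u (Suc t) \<le> ennreal r * u t + ennreal b"
    and u0: "u 0 \<le> ennreal a" and r: "r \<ge> 0" and b: "b \<ge> 0" and a: "a \<ge> 0"
  shows "t \<le> T \<Longrightarrow> u t \<le> ennreal (r ^ t * a + b * (\<Sum>j<t. r ^ j))"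
proof (induction t)
  case 0 then show ?case using u0 by simp
next
  case (Suc t)
  have nn: "r ^ t * a + b * (\<Sum>j<t. r ^ j) \<ge> 0" using r a b by (simp add: sum_nonneg)
  have "u (Suc t) \<le> ennreal r * u t + ennreal b" using step Suc.prems by simp
  also have "\<dots> \<le> ennreal r * ennreal (r ^ t * a + b * (\<Sum>j<t. r ^ j)) + ennreal b"
    using Suc.IH Suc.prems by (intro add_right_mono mult_left_mono) auto
  also have "\<dots> = ennreal (r * (r ^ t * a + b * (\<Sum>j<t. r ^ j)) + b)"
    using nn r b by (simp add: ennreal_mult ennreal_plus)
  also have "r * (r ^ t * a + b * (\<Sum>j<t. r ^ j)) + b = r ^ Suc t * a + b * (\<Sum>j<Suc t. r ^ j)"
  proof -
    have "r * (\<Sum>j<t. r ^ j) = (\<Sum>j<t. r ^ Suc j)" by (simp add: sum_distrib_left)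
    moreover have "(\<Sum>j<Suc t. r ^ j) = 1 + (\<Sum>j<t. r ^ Suc j)"
      by (subst sum.lessThan_Suc_shift) simp
    ultimately show ?thesis by (simp add: algebra_simps)
  qed
  finally show ?case .
qed

section \<open>The canonical sample space\<close>

lemma xhat_cong:
  assumes "\<forall>k'<k. \<forall>b<B. xi k' b = xi' k' b"
  shows "xhat gF B \<beta> i xi c z k = xhat gF B \<beta> i xi' c z k"
  using assms by (induction k) (simp_all add: Let_def)

locale fedcanon_sampling = fedcanon_analysis gF f gradf h N K B L \<rho> \<mu> Bh \<alpha> \<beta> \<phi>star
  for gF :: "nat \<Rightarrow> 'a::euclidean_space \<Rightarrow> 'b \<Rightarrow> 'a" and f gradf h N K B L \<rho> \<mu> Bh \<alpha> \<beta> \<phi>star +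
  fixes D :: "nat \<Rightarrow> 'b measure" and \<sigma> :: real and z0 :: 'a and c0 :: "nat \<Rightarrow> 'a" and T :: nat
  assumes D_prob: "\<forall>i<N. prob_space (D i)"
    and gF_meas: "\<forall>i<N. (\<lambda>(x, s). gF i x s) \<in> borel_measurable (borel \<Otimes>\<^sub>M D i)"
    and unbiased: "\<forall>i<N. \<forall>x. integrable (D i) (gF i x) \<and> (\<integral>s. gF i x s \<partial>D i) = gradf i x"
    and variance: "\<forall>i<N. \<forall>x. (\<integral>\<^sup>+s. ennreal ((norm (gF i x s - gradf i x))\<^sup>2) \<partial>D i) \<le> ennreal (\<sigma>\<^sup>2)"
    and c0_sum: "(\<Sum>i<N. c0 i) = 0"
    and f_grad: "\<forall>i<N. \<forall>x. (f i has_derivative (\<lambda>u. inner (gradf i x) u)) (at x)"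
begin

text \<open>All samples of the first \<open>T\<close> rounds form one point of a finite product of probability
  spaces.  Indices with \<open>i \<ge> N\<close> never occur; \<open>D 0\<close> is only a placeholder for them.\<close>

definition "Dsample l = D (if fst (snd l) < N then fst (snd l) else 0)"
definition "Idx = {(t, i, k, b). t < T \<and> i < N \<and> k < K \<and> b < B}"
definition "Samples = PiM Idx Dsample"
definition "rounds y = (\<lambda>t i k b. y (t, i, k, b))"
definition "Z t y = fst (fedcanon gF h N K B \<alpha> \<beta> z0 c0 (rounds y) t)"
definition "C t y = snd (fedcanon gF h N K B \<alpha> \<beta> z0 c0 (rounds y) t)"
definition "Xhat t i k y = local_iter (rounds y t) (C t y) (Z t y) i k"
definition "gnoise i x s = gF i x s - gradf i x"

lemma Dsample_eq: "i < N \<Longrightarrow> Dsample (t, i, k, b) = D i"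
  by (simp add: Dsample_def)

lemma prob_space_Dsample: "prob_space (Dsample l)"
  using D_prob N_pos by (simp add: Dsample_def)

lemma prob_space_Samples: "prob_space Samples"
  unfolding Samples_def by (rule prob_space_PiM) (use prob_space_Dsample in auto)

lemma finite_Idx: "finite Idx"
proof -
  have "Idx \<subseteq> {..<T} \<times> {..<N} \<times> {..<K} \<times> {..<B}" by (auto simp: Idx_def)
  then show ?thesis by (rule finite_subset) auto
qed

lemma Z_0: "Z 0 y = z0" and C_0: "C 0 y = c0"
  by (simp_all add: Z_def C_def)

lemma Z_Suc: "Z (Suc t) y = next_z (rounds y t) (C t y) (Z t y)"
  and C_Suc: "C (Suc t) y = next_c (rounds y t) (C t y) (Z t y)"
  by (simp_all add: Z_def C_def next_z_def next_c_def upd_mean_def upd_def Let_def)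

lemma Xhat_0: "Xhat t i 0 y = Z t y"
  by (simp add: Xhat_def local_iter_0)

lemma Xhat_Suc: "Xhat t i (Suc k) y
    = Xhat t i k y - \<beta> *\<^sub>R ((1 / real B) *\<^sub>R (\<Sum>b<B. gF i (Xhat t i k y) (y (t, i, k, b))) + C t y i)"
  by (simp add: Xhat_def local_iter_Suc sgrad_def rounds_def)

lemma upd_eq_Xhat: "upd (rounds y t) (C t y) (Z t y) i = (1 / (\<beta> * real K)) *\<^sub>R (Z t y - Xhat t i K y)"
  by (simp add: upd_def Delta_def Xhat_def local_iter_def rounds_def)

lemma noise_eq_gnoise: "noise (rounds y t) (C t y) (Z t y) i k
    = (1 / real B) *\<^sub>R (\<Sum>b<B. gnoise i (Xhat t i k y) (y (t, i, k, b)))"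
  using B_pos by (simp add: noise_def sgrad_def gnoise_def Xhat_def sum_subtractf scaleR_diff_right
      sum_constant_scaleR rounds_def)

lemma sum_C: "(\<Sum>i<N. C t y i) = 0"
  by (induction t) (simp_all add: C_0 c0_sum C_Suc sum_next_c)

text \<open>The state after \<open>t\<close> rounds depends only on the samples of rounds \<open>< t\<close>, and the
  \<open>k\<close>-th local iterate of round \<open>t\<close> additionally only on its local steps \<open>< k\<close>: this is
  what makes each new sample independent of the point where it is used.\<close>

lemma Z_C_cong:
  assumes "\<forall>t'<t. \<forall>i<N. \<forall>k<K. \<forall>b<B. y (t', i, k, b) = y' (t', i, k, b)"
  shows "Z t y = Z t y' \<and> (\<forall>i<N. C t y i = C t y' i)"
  using assms
proof (induction t)
  case 0 then show ?case by (simp add: Z_0 C_0)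
next
  case (Suc t)
  then have IH: "Z t y = Z t y'" "\<And>i. i < N \<Longrightarrow> C t y i = C t y' i" by auto
  have "xhat gF B \<beta> i (rounds y t i) (C t y' i) (Z t y') K = xhat gF B \<beta> i (rounds y' t i) (C t y' i) (Z t y') K"
    if i: "i < N" for i
    using Suc.prems i by (intro xhat_cong) (auto simp: rounds_def)
  then have "upd (rounds y t) (C t y) (Z t y) i = upd (rounds y' t) (C t y') (Z t y') i" if i: "i < N" for i
    using IH i that by (simp add: upd_def Delta_def)
  moreover from this have "upd_mean (rounds y t) (C t y) (Z t y) = upd_mean (rounds y' t) (C t y') (Z t y')"
    unfolding upd_mean_def by (intro arg_cong[where f="\<lambda>x. (1 / real N) *\<^sub>R x"] sum.cong) auto
  ultimately show ?case
    using IH by (auto simp: Z_Suc C_Suc next_z_def next_c_def)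
qed

lemma Xhat_cong:
  assumes i: "i < N" and "\<forall>t'<t. \<forall>i<N. \<forall>k<K. \<forall>b<B. y (t', i, k, b) = y' (t', i, k, b)"
    and "\<forall>k'<k. \<forall>b<B. y (t, i, k', b) = y' (t, i, k', b)"
  shows "Xhat t i k y = Xhat t i k y'"
proof -
  from Z_C_cong[OF assms(2)] i have "Z t y = Z t y'" "C t y i = C t y' i" by auto
  then show ?thesis unfolding Xhat_def local_iter_def using assms(3)
    by (simp, intro xhat_cong) (auto simp: rounds_def)
qed

lemma Xhat_fun_upd_later: "i < N \<Longrightarrow> k \<le> k' \<Longrightarrow> Xhat t i k (y((t, i', k', b) := s)) = Xhat t i k y"
  by (rule Xhat_cong) auto


lemma f_continuous: "i < N \<Longrightarrow> continuous_on UNIV (f i)"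
proof -
  assume "i < N"
  then have "isCont (f i) x" for x using f_grad has_derivative_continuous by blast
  then show ?thesis by (simp add: continuous_at_imp_continuous_on)
qed

lemma gradf_continuous: "i < N \<Longrightarrow> continuous_on UNIV (gradf i)"
proof (rule lipschitz_on_continuous_on)
  assume "i < N"
  then show "L-lipschitz_on UNIV (gradf i)"
    using gradf_lipschitz L_pos by (intro lipschitz_onI) (auto simp: dist_norm)
qed

lemma measurable_gradf_comp:
  "i < N \<Longrightarrow> X \<in> borel_measurable M \<Longrightarrow> (\<lambda>y. gradf i (X y)) \<in> borel_measurable M"
  using measurable_compose[OF _ borel_measurable_continuous_onI[OF gradf_continuous]] by blast

lemma measurable_prox_comp:
  "X \<in> borel_measurable M \<Longrightarrow> (\<lambda>y. prox \<alpha> h (X y)) \<in> borel_measurable M"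
  using measurable_compose[OF _ borel_measurable_continuous_onI[OF
        continuous_on_prox[OF weakly_convex rho_nonneg alpha_pos step_alpha_bounds(3)]]]
  by blast

lemma measurable_phi_comp: "X \<in> borel_measurable M \<Longrightarrow> (\<lambda>y. phi (X y)) \<in> borel_measurable M"
proof -
  assume X: "X \<in> borel_measurable M"
  have "(\<lambda>y. f i (X y)) \<in> borel_measurable M" if "i < N" for i
    using measurable_compose[OF X borel_measurable_continuous_onI[OF f_continuous[OF that]]] .
  moreover have "(\<lambda>y. h (X y)) \<in> borel_measurable M"
    using measurable_compose[OF X borel_measurable_continuous_onI[OF weakly_convex_continuous[OF weakly_convex]]] .
  ultimately show ?thesis unfolding phi_def by measurable
qed

lemma measurable_gF_sample:
  assumes l: "(t, i, k, b) \<in> Idx" and X: "X \<in> borel_measurable Samples"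
  shows "(\<lambda>y. gF i (X y) (y (t, i, k, b))) \<in> borel_measurable Samples"
proof -
  have i: "i < N" using l by (simp add: Idx_def)
  have "(\<lambda>y. y (t, i, k, b)) \<in> measurable Samples (D i)"
    unfolding Samples_def using measurable_component_singleton[OF l, of Dsample] by (simp add: Dsample_eq[OF i])
  with X have "(\<lambda>y. (X y, y (t, i, k, b))) \<in> measurable Samples (borel \<Otimes>\<^sub>M D i)"
    by (rule measurable_Pair)
  moreover have "(\<lambda>(x, s). gF i x s) \<in> borel_measurable (borel \<Otimes>\<^sub>M D i)" using gF_meas i by blast
  ultimately have "(\<lambda>y. (\<lambda>(x, s). gF i x s) (X y, y (t, i, k, b))) \<in> borel_measurable Samples"
    by (rule measurable_compose)
  then show ?thesis by simp
qed

lemma measurable_gnoise_sample: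
  assumes "(t, i, k, b) \<in> Idx" and X: "X \<in> borel_measurable Samples"
  shows "(\<lambda>y. gnoise i (X y) (y (t, i, k, b))) \<in> borel_measurable Samples"
proof -
  have i: "i < N" using assms by (simp add: Idx_def)
  show ?thesis unfolding gnoise_def
    using measurable_gF_sample[OF assms] measurable_gradf_comp[OF i X] by measurable
qed

lemma measurable_Xhat_step:
  assumes t: "t < T" and i: "i < N" and k: "k \<le> K"
    and Zm: "Z t \<in> borel_measurable Samples" and Cm: "(\<lambda>y. C t y i) \<in> borel_measurable Samples"
  shows "Xhat t i k \<in> borel_measurable Samples"
  using k
proof (induction k)
  case 0 then show ?case using Zm by (simp add: Xhat_0[abs_def])
next
  case (Suc k)
  then have IH: "Xhat t i k \<in> borel_measurable Samples" by simp
  have "(\<lambda>y. gF i (Xhat t i k y) (y (t, i, k, b))) \<in> borel_measurable Samples" if "b < B" for b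
    using that Suc.prems t i by (intro measurable_gF_sample IH) (auto simp: Idx_def)
  then show ?case using IH Cm unfolding Xhat_Suc[abs_def] by measurable
qed

lemma measurable_Z_C:
  assumes "t \<le> T"
  shows "Z t \<in> borel_measurable Samples \<and> (\<forall>i<N. (\<lambda>y. C t y i) \<in> borel_measurable Samples)"
  using assms
proof (induction t)
  case 0 then show ?case by (simp add: Z_0[abs_def] C_0[abs_def])
next
  case (Suc t)
  then have t: "t < T" and Zm: "Z t \<in> borel_measurable Samples"
    and Cm: "\<And>i. i < N \<Longrightarrow> (\<lambda>y. C t y i) \<in> borel_measurable Samples"
    by auto
  have updm: "(\<lambda>y. upd (rounds y t) (C t y) (Z t y) i) \<in> borel_measurable Samples" if "i < N" for i
    unfolding upd_eq_Xhat using Zm measurable_Xhat_step[OF t that order_refl Zm Cm[OF that]] by measurable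
  then have meanm: "(\<lambda>y. upd_mean (rounds y t) (C t y) (Z t y)) \<in> borel_measurable Samples"
    unfolding upd_mean_def by measurable
  have "Z (Suc t) \<in> borel_measurable Samples"
    unfolding Z_Suc[abs_def] next_z_def using Zm meanm
    by (intro measurable_prox_comp borel_measurable_diff borel_measurable_scaleR measurable_const) auto
  moreover have "(\<lambda>y. C (Suc t) y i) \<in> borel_measurable Samples" if "i < N" for i
    unfolding C_Suc[abs_def] next_c_def using Cm[OF that] meanm updm[OF that] by measurable
  ultimately show ?case by blast
qed

lemma measurable_Xhat: "t < T \<Longrightarrow> i < N \<Longrightarrow> k \<le> K \<Longrightarrow> Xhat t i k \<in> borel_measurable Samples"
  using measurable_Xhat_step measurable_Z_C[of t] by auto

lemma measurable_noise: "t < T \<Longrightarrow> i < N \<Longrightarrow> k < K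
    \<Longrightarrow> (\<lambda>y. noise (rounds y t) (C t y) (Z t y) i k) \<in> borel_measurable Samples"
  unfolding noise_eq_gnoise using measurable_gnoise_sample[OF _ measurable_Xhat]
  by (auto simp: Idx_def)

lemma measurable_Phi:
  assumes "t \<le> T"
  shows "(\<lambda>y. Phi (Z t y) (C t y)) \<in> borel_measurable Samples"
proof -
  have Zm: "Z t \<in> borel_measurable Samples" and Cm: "\<And>i. i < N \<Longrightarrow> (\<lambda>y. C t y i) \<in> borel_measurable Samples"
    using measurable_Z_C[OF assms] by auto
  have gm: "(\<lambda>y. gradf i (Z t y)) \<in> borel_measurable Samples" if "i < N" for i
    using measurable_gradf_comp[OF that Zm] .
  then have "(\<lambda>y. grad_mean (Z t y)) \<in> borel_measurable Samples"
    unfolding grad_mean_def by measurable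
  then have "(\<lambda>y. Err (Z t y) (C t y)) \<in> borel_measurable Samples"
    unfolding Err_def using gm Cm by measurable
  then show ?thesis unfolding Phi_def using measurable_phi_comp[OF Zm] by measurable
qed


lemma nn_integral_norm_add_gnoise_le:
  assumes i: "i < N"
  shows "(\<integral>\<^sup>+ s. ennreal ((norm (u + w *\<^sub>R gnoise i x s))\<^sup>2) \<partial>D i) \<le> ennreal ((norm u)\<^sup>2 + w\<^sup>2 * \<sigma>\<^sup>2)"
proof (rule nn_integral_norm_add_zero_mean_le)
  show "prob_space (D i)" using D_prob i by blast
  then interpret prob_space "D i" .
  have "(\<lambda>(x, s). gF i x s) \<in> borel_measurable (borel \<Otimes>\<^sub>M D i)" using gF_meas i by blast
  then have "(\<lambda>s. (\<lambda>(x, s). gF i x s) (x, s)) \<in> borel_measurable (D i)"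
    by (rule measurable_compose[rotated]) simp
  then show "gnoise i x \<in> borel_measurable (D i)" by (simp add: gnoise_def[abs_def])
  have ui: "integrable (D i) (gF i x)" "(\<integral>s. gF i x s \<partial>D i) = gradf i x" using unbiased i by auto
  then show "integrable (D i) (gnoise i x)" unfolding gnoise_def[abs_def] by simp
  show "(\<integral>s. gnoise i x s \<partial>D i) = 0" unfolding gnoise_def using ui by (simp add: prob_space)
  show "(\<integral>\<^sup>+ s. ennreal ((norm (gnoise i x s))\<^sup>2) \<partial>D i) \<le> ennreal (\<sigma>\<^sup>2)"
    using variance i by (simp add: gnoise_def)
qed simp

lemma measurable_scaled_gnoise:
  assumes i: "i < N"
  shows "(\<lambda>(x, s). w *\<^sub>R gnoise i x s) \<in> borel_measurable (borel \<Otimes>\<^sub>M D i)"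
proof -
  have "(\<lambda>(x, s). gF i x s) \<in> borel_measurable (borel \<Otimes>\<^sub>M D i)" using gF_meas i by blast
  moreover have "(\<lambda>p. gradf i (fst p)) \<in> borel_measurable (borel \<Otimes>\<^sub>M D i)"
    by (intro measurable_gradf_comp[OF i] measurable_fst'') simp
  ultimately have "(\<lambda>p. w *\<^sub>R ((\<lambda>(x, s). gF i x s) p - gradf i (fst p))) \<in> borel_measurable (borel \<Otimes>\<^sub>M D i)"
    by measurable
  then show ?thesis by (simp add: gnoise_def case_prod_beta)
qed

lemma nn_integral_Samples_norm_add_gnoise_le:
  assumes l: "(t, i, k, b) \<in> Idx"
    and Vm: "V \<in> borel_measurable Samples" and Xm: "X \<in> borel_measurable Samples"
    and Vi: "\<And>y s. y \<in> space Samples \<Longrightarrow> s \<in> space (D i) \<Longrightarrow> V (y((t, i, k, b) := s)) = V y"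
    and Xi: "\<And>y s. y \<in> space Samples \<Longrightarrow> s \<in> space (D i) \<Longrightarrow> X (y((t, i, k, b) := s)) = X y"
  shows "(\<integral>\<^sup>+ y. ennreal ((norm (V y + w *\<^sub>R gnoise i (X y) (y (t, i, k, b))))\<^sup>2) \<partial>Samples)
      \<le> (\<integral>\<^sup>+ y. ennreal ((norm (V y))\<^sup>2) \<partial>Samples) + ennreal (w\<^sup>2 * \<sigma>\<^sup>2)"
proof -
  have i: "i < N" using l by (simp add: Idx_def)
  note Di = Dsample_eq[OF i, of t k b]
  show ?thesis unfolding Samples_def
    by (rule nn_integral_PiM_norm_add_fresh_le[where G="\<lambda>x s. w *\<^sub>R gnoise i x s"])
      (use prob_space_Dsample finite_Idx l Vm Xm Vi Xi measurable_scaled_gnoise[OF i]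
        nn_integral_norm_add_gnoise_le[OF i] in \<open>simp_all add: Samples_def Di\<close>)
qed

lemma nn_integral_norm_add_batch_noise_le:
  assumes t: "t < T" and i: "i < N" and k: "k < K" and m: "m \<le> B"
    and Vm: "V \<in> borel_measurable Samples" and Xm: "X \<in> borel_measurable Samples"
    and Vi: "\<And>b y s. b < B \<Longrightarrow> y \<in> space Samples \<Longrightarrow> s \<in> space (D i) \<Longrightarrow> V (y((t, i, k, b) := s)) = V y"
    and Xi: "\<And>b y s. b < B \<Longrightarrow> y \<in> space Samples \<Longrightarrow> s \<in> space (D i) \<Longrightarrow> X (y((t, i, k, b) := s)) = X y"
  shows "(\<integral>\<^sup>+ y. ennreal ((norm (V y + w *\<^sub>R (\<Sum>b<m. gnoise i (X y) (y (t, i, k, b)))))\<^sup>2) \<partial>Samples)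
      \<le> (\<integral>\<^sup>+ y. ennreal ((norm (V y))\<^sup>2) \<partial>Samples) + ennreal (real m * (w\<^sup>2 * \<sigma>\<^sup>2))"
  using m
proof (induction m)
  case 0 then show ?case by simp
next
  case (Suc m)
  then have mB: "m < B" by simp
  define V' where "V' y = V y + w *\<^sub>R (\<Sum>b<m. gnoise i (X y) (y (t, i, k, b)))" for y
  have l: "(t, i, k, m) \<in> Idx" using t i k mB by (simp add: Idx_def)
  have "(\<lambda>y. gnoise i (X y) (y (t, i, k, b))) \<in> borel_measurable Samples" if "b < m" for b
    using that mB t i k by (intro measurable_gnoise_sample Xm) (auto simp: Idx_def)
  then have V'm: "V' \<in> borel_measurable Samples" unfolding V'_def[abs_def] using Vm by measurable
  have V'i: "V' (y((t, i, k, m) := s)) = V' y" if "y \<in> space Samples" "s \<in> space (D i)" for y s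
    using Vi[OF mB that] Xi[OF mB that] by (simp add: V'_def)
  have "(\<integral>\<^sup>+ y. ennreal ((norm (V y + w *\<^sub>R (\<Sum>b<Suc m. gnoise i (X y) (y (t, i, k, b)))))\<^sup>2) \<partial>Samples)
      = (\<integral>\<^sup>+ y. ennreal ((norm (V' y + w *\<^sub>R gnoise i (X y) (y (t, i, k, m))))\<^sup>2) \<partial>Samples)"
    by (simp add: V'_def algebra_simps)
  also have "\<dots> \<le> (\<integral>\<^sup>+ y. ennreal ((norm (V' y))\<^sup>2) \<partial>Samples) + ennreal (w\<^sup>2 * \<sigma>\<^sup>2)"
    by (rule nn_integral_Samples_norm_add_gnoise_le[OF l V'm Xm V'i Xi[OF mB]])
  also have "\<dots> \<le> (\<integral>\<^sup>+ y. ennreal ((norm (V y))\<^sup>2) \<partial>Samples) + ennreal (real m * (w\<^sup>2 * \<sigma>\<^sup>2))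
      + ennreal (w\<^sup>2 * \<sigma>\<^sup>2)"
    using Suc unfolding V'_def by (intro add_right_mono) simp
  also have "\<dots> = (\<integral>\<^sup>+ y. ennreal ((norm (V y))\<^sup>2) \<partial>Samples) + ennreal (real (Suc m) * (w\<^sup>2 * \<sigma>\<^sup>2))"
    by (simp add: add.assoc ennreal_plus[symmetric] algebra_simps del: ennreal_plus)
  finally show ?case .
qed

lemma nn_integral_norm_local_noise_le:
  assumes t: "t < T" and i: "i < N" and m: "m \<le> K"
  shows "(\<integral>\<^sup>+ y. ennreal ((norm (w *\<^sub>R (\<Sum>k<m. \<Sum>b<B. gnoise i (Xhat t i k y) (y (t, i, k, b)))))\<^sup>2) \<partial>Samples)
      \<le> ennreal (real m * (real B * (w\<^sup>2 * \<sigma>\<^sup>2)))"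
  using m
proof (induction m)
  case 0 then show ?case by simp
next
  case (Suc m)
  then have mK: "m < K" by simp
  define V where "V y = w *\<^sub>R (\<Sum>k<m. \<Sum>b<B. gnoise i (Xhat t i k y) (y (t, i, k, b)))" for y
  have "(\<lambda>y. gnoise i (Xhat t i k y) (y (t, i, k, b))) \<in> borel_measurable Samples" if "k < m" "b < B" for k b
    using that mK t i by (intro measurable_gnoise_sample measurable_Xhat) (auto simp: Idx_def)
  then have Vm: "V \<in> borel_measurable Samples" unfolding V_def[abs_def] by measurable
  have Vi: "V (y((t, i, m, b) := s)) = V y" for b y s
    unfolding V_def using Xhat_fun_upd_later[OF i, of _ m t]
    by (intro arg_cong[where f="\<lambda>x. w *\<^sub>R x"] sum.cong) auto
  have "(\<integral>\<^sup>+ y. ennreal ((norm (w *\<^sub>R (\<Sum>k<Suc m. \<Sum>b<B. gnoise i (Xhat t i k y) (y (t, i, k, b)))))\<^sup>2) \<partial>Samples)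
      = (\<integral>\<^sup>+ y. ennreal ((norm (V y + w *\<^sub>R (\<Sum>b<B. gnoise i (Xhat t i m y) (y (t, i, m, b)))))\<^sup>2) \<partial>Samples)"
    by (simp add: V_def algebra_simps)
  also have "\<dots> \<le> (\<integral>\<^sup>+ y. ennreal ((norm (V y))\<^sup>2) \<partial>Samples) + ennreal (real B * (w\<^sup>2 * \<sigma>\<^sup>2))"
    using Vi Xhat_fun_upd_later[OF i order_refl]
    by (intro nn_integral_norm_add_batch_noise_le[OF t i mK order_refl Vm measurable_Xhat[OF t i]]) (use mK in auto)
  also have "\<dots> \<le> ennreal (real m * (real B * (w\<^sup>2 * \<sigma>\<^sup>2))) + ennreal (real B * (w\<^sup>2 * \<sigma>\<^sup>2))"
    using Suc unfolding V_def by (intro add_right_mono) simp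
  also have "\<dots> = ennreal (real (Suc m) * (real B * (w\<^sup>2 * \<sigma>\<^sup>2)))"
    by (simp add: ennreal_plus[symmetric] algebra_simps del: ennreal_plus)
  finally show ?case .
qed

lemma expected_mean_avg_noise_sq_le:
  assumes t: "t < T"
  shows "(\<integral>\<^sup>+ y. ennreal (mean_avg_noise_sq (rounds y t) (C t y) (Z t y)) \<partial>Samples)
    \<le> ennreal (\<sigma>\<^sup>2 / (real B * real K))"
  unfolding mean_avg_noise_sq_def
proof (rule nn_integral_mean_le[OF N_pos])
  fix i assume i: "i < N"
  have eq: "avg_noise (rounds y t) (C t y) (Z t y) i
      = (1 / (real K * real B)) *\<^sub>R (\<Sum>k<K. \<Sum>b<B. gnoise i (Xhat t i k y) (y (t, i, k, b)))" for y
    unfolding avg_noise_def noise_eq_gnoise by (simp add: scaleR_sum_right[symmetric])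
  show "(\<lambda>y. (norm (avg_noise (rounds y t) (C t y) (Z t y) i))\<^sup>2) \<in> borel_measurable Samples"
    unfolding avg_noise_def using measurable_noise[OF t i] by measurable
  have "(\<integral>\<^sup>+ y. ennreal ((norm (avg_noise (rounds y t) (C t y) (Z t y) i))\<^sup>2) \<partial>Samples)
      \<le> ennreal (real K * (real B * ((1 / (real K * real B))\<^sup>2 * \<sigma>\<^sup>2)))"
    unfolding eq by (rule nn_integral_norm_local_noise_le[OF t i order_refl])
  also have "real K * (real B * ((1 / (real K * real B))\<^sup>2 * \<sigma>\<^sup>2)) = \<sigma>\<^sup>2 / (real B * real K)"
    using K_pos B_pos by (simp add: power2_eq_square field_simps)
  finally show "(\<integral>\<^sup>+ y. ennreal ((norm (avg_noise (rounds y t) (C t y) (Z t y) i))\<^sup>2) \<partial>Samples)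
      \<le> ennreal (\<sigma>\<^sup>2 / (real B * real K))" .
qed auto

lemma expected_mean_noise_sq_le:
  assumes t: "t < T"
  shows "(\<integral>\<^sup>+ y. ennreal (mean_noise_sq (rounds y t) (C t y) (Z t y)) \<partial>Samples) \<le> ennreal (\<sigma>\<^sup>2 / real B)"
  unfolding mean_noise_sq_def
proof (rule nn_integral_mean_le[OF N_pos])
  fix i assume i: "i < N"
  show "(\<lambda>y. (1 / real K) * (\<Sum>k<K. (norm (noise (rounds y t) (C t y) (Z t y) i k))\<^sup>2)) \<in> borel_measurable Samples"
    using measurable_noise[OF t i] by measurable
  show "(\<integral>\<^sup>+ y. ennreal ((1 / real K) * (\<Sum>k<K. (norm (noise (rounds y t) (C t y) (Z t y) i k))\<^sup>2)) \<partial>Samples)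
      \<le> ennreal (\<sigma>\<^sup>2 / real B)"
  proof (rule nn_integral_mean_le[OF K_pos])
    fix k assume k: "k < K"
    show "(\<lambda>y. (norm (noise (rounds y t) (C t y) (Z t y) i k))\<^sup>2) \<in> borel_measurable Samples"
      using measurable_noise[OF t i k] by measurable
    have "(\<integral>\<^sup>+ y. ennreal ((norm (noise (rounds y t) (C t y) (Z t y) i k))\<^sup>2) \<partial>Samples)
        = (\<integral>\<^sup>+ y. ennreal ((norm ((\<lambda>y. 0) y + (1 / real B) *\<^sub>R (\<Sum>b<B. gnoise i (Xhat t i k y) (y (t, i, k, b)))))\<^sup>2) \<partial>Samples)"
      unfolding noise_eq_gnoise by simp
    also have "\<dots> \<le> (\<integral>\<^sup>+ y. ennreal ((norm ((\<lambda>y. 0::'a) y))\<^sup>2) \<partial>Samples) + ennreal (real B * ((1 / real B)\<^sup>2 * \<sigma>\<^sup>2))"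
      by (rule nn_integral_norm_add_batch_noise_le[OF t i k order_refl _ measurable_Xhat[OF t i]])
        (use Xhat_fun_upd_later[OF i] k in auto)
    also have "\<dots> = ennreal (\<sigma>\<^sup>2 / real B)"
      using B_pos by (simp add: power2_eq_square field_simps)
    finally show "(\<integral>\<^sup>+ y. ennreal ((norm (noise (rounds y t) (C t y) (Z t y) i k))\<^sup>2) \<partial>Samples)
        \<le> ennreal (\<sigma>\<^sup>2 / real B)" .
  qed auto
qed (auto simp: sum_nonneg)


definition "rate = 1 - \<alpha> * \<mu> / 4"
definition "noise_floor = \<alpha> * ((5/4) * err_weight * (\<sigma>\<^sup>2 / (real B * real K))
    + (25/4) * drift_weight * (\<sigma>\<^sup>2 / real B) + 25 * drift_weight * Bh)"

lemma Bh_nonneg: "Bh \<ge> 0"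
proof -
  have "(1 / \<alpha>) *\<^sub>R (0 - prox \<alpha> h 0) \<in> subdiff h (prox \<alpha> h 0)"
    by (rule prox_subgradient[OF weakly_convex alpha_pos step_alpha_bounds(3)])
  with subgrad_bdd have "(norm ((1 / \<alpha>) *\<^sub>R (0 - prox \<alpha> h 0)))\<^sup>2 \<le> Bh" by blast
  then show ?thesis by (meson order_trans zero_le_power2)
qed

lemma rate_bounds: "rate \<ge> 0" "rate < 1"
proof -
  have "12 * (6 + delta) * kappa \<ge> 0" using kappa_bounds delta_bounds by simp
  then show "rate \<ge> 0" using kappa_bounds(2) by (simp add: rate_def)
  show "rate < 1" using alpha_pos mu_pos by (simp add: rate_def)
qed

lemma noise_floor_nonneg: "noise_floor \<ge> 0"
  using alpha_pos err_weight_bounds drift_weight_bounds Bh_nonneg by (simp add: noise_floor_def)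

lemma Phi_nonneg: "Phi z c \<ge> 0"
  using phistar_le alpha_pos by (simp add: Phi_def phi_def Err_def sum_nonneg)

lemma ennreal_Phi: "ennreal (Phi z c) = ennreal (phi z - \<phi>star) + ennreal \<alpha> * ennreal (Err z c)"
proof -
  have "phi z - \<phi>star \<ge> 0" using phistar_le by (simp add: phi_def)
  moreover have "Err z c \<ge> 0" by (simp add: Err_def sum_nonneg)
  ultimately show ?thesis using alpha_pos by (simp add: Phi_def ennreal_plus ennreal_mult)
qed

definition "round_noise t y = \<alpha> * ((5/4) * err_weight * mean_avg_noise_sq (rounds y t) (C t y) (Z t y)
    + (25/4) * drift_weight * mean_noise_sq (rounds y t) (C t y) (Z t y) + 25 * drift_weight * Bh)"

lemma round_noise_nonneg: "round_noise t y \<ge> 0"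
  using alpha_pos err_weight_bounds drift_weight_bounds Bh_nonneg
  by (simp add: round_noise_def mean_avg_noise_sq_def mean_noise_sq_def sum_nonneg)

lemma Phi_Suc_le: "Phi (Z (Suc t) y) (C (Suc t) y) \<le> rate * Phi (Z t y) (C t y) + round_noise t y"
  using Phi_next_le[OF sum_C[of t y], of "rounds y t" "Z t y"]
  by (simp add: Z_Suc C_Suc rate_def round_noise_def)

lemma expected_round_noise_le:
  assumes t: "t < T"
  shows "(\<integral>\<^sup>+ y. ennreal (round_noise t y) \<partial>Samples) \<le> ennreal noise_floor"
proof -
  interpret prob_space Samples by (rule prob_space_Samples)
  define nq where "nq y = mean_avg_noise_sq (rounds y t) (C t y) (Z t y)" for y
  define zq where "zq y = mean_noise_sq (rounds y t) (C t y) (Z t y)" for y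
  define a1 where "a1 = \<alpha> * ((5/4) * err_weight)"
  define a2 where "a2 = \<alpha> * ((25/4) * drift_weight)"
  define a3 where "a3 = \<alpha> * (25 * drift_weight * Bh)"
  have a0: "a1 \<ge> 0" "a2 \<ge> 0" "a3 \<ge> 0"
    using alpha_pos err_weight_bounds drift_weight_bounds Bh_nonneg by (simp_all add: a1_def a2_def a3_def)
  have nn: "nq y \<ge> 0" "zq y \<ge> 0" for y
    by (simp_all add: nq_def zq_def mean_avg_noise_sq_def mean_noise_sq_def sum_nonneg)
  have nqm: "nq \<in> borel_measurable Samples"
    unfolding nq_def[abs_def] mean_avg_noise_sq_def avg_noise_def using measurable_noise[OF t] by measurable
  have zqm: "zq \<in> borel_measurable Samples"
    unfolding zq_def[abs_def] mean_noise_sq_def using measurable_noise[OF t] by measurable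
  have "ennreal (round_noise t y) = ennreal a1 * ennreal (nq y) + ennreal a2 * ennreal (zq y) + ennreal a3" for y
  proof -
    have "round_noise t y = a1 * nq y + a2 * zq y + a3"
      by (simp add: round_noise_def nq_def zq_def a1_def a2_def a3_def algebra_simps)
    then show ?thesis using a0 nn[of y] by (simp add: ennreal_plus ennreal_mult)
  qed
  then have "(\<integral>\<^sup>+ y. ennreal (round_noise t y) \<partial>Samples)
      = ennreal a1 * (\<integral>\<^sup>+ y. ennreal (nq y) \<partial>Samples) + ennreal a2 * (\<integral>\<^sup>+ y. ennreal (zq y) \<partial>Samples) + ennreal a3"
    using nqm zqm by (simp add: nn_integral_add nn_integral_cmult emeasure_space_1)
  also have "\<dots> \<le> ennreal a1 * ennreal (\<sigma>\<^sup>2 / (real B * real K)) + ennreal a2 * ennreal (\<sigma>\<^sup>2 / real B) + ennreal a3"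
    using expected_mean_avg_noise_sq_le[OF t] expected_mean_noise_sq_le[OF t]
    unfolding nq_def zq_def by (intro add_mono mult_left_mono order_refl) auto
  also have "\<dots> = ennreal (a1 * (\<sigma>\<^sup>2 / (real B * real K)) + a2 * (\<sigma>\<^sup>2 / real B) + a3)"
  proof -
    have "ennreal a1 * ennreal (\<sigma>\<^sup>2 / (real B * real K)) = ennreal (a1 * (\<sigma>\<^sup>2 / (real B * real K)))"
      "ennreal a2 * ennreal (\<sigma>\<^sup>2 / real B) = ennreal (a2 * (\<sigma>\<^sup>2 / real B))"
      using a0 by (simp_all add: ennreal_mult[symmetric])
    moreover have "a1 * (\<sigma>\<^sup>2 / (real B * real K)) \<ge> 0" "a2 * (\<sigma>\<^sup>2 / real B) \<ge> 0" using a0 by simp_all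
    ultimately show ?thesis using a0 by (simp add: ennreal_plus[symmetric] del: ennreal_plus)
  qed
  also have "a1 * (\<sigma>\<^sup>2 / (real B * real K)) + a2 * (\<sigma>\<^sup>2 / real B) + a3 = noise_floor"
    by (simp add: noise_floor_def a1_def a2_def a3_def algebra_simps)
  finally show ?thesis .
qed

lemma expected_Phi_Suc_le:
  assumes t: "t < T"
  shows "(\<integral>\<^sup>+ y. ennreal (Phi (Z (Suc t) y) (C (Suc t) y)) \<partial>Samples)
      \<le> ennreal rate * (\<integral>\<^sup>+ y. ennreal (Phi (Z t y) (C t y)) \<partial>Samples) + ennreal noise_floor"
proof -
  have Pm: "(\<lambda>y. Phi (Z t y) (C t y)) \<in> borel_measurable Samples"
    using measurable_Phi t by simp
  have Rm: "(\<lambda>y. round_noise t y) \<in> borel_measurable Samples"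
    unfolding round_noise_def mean_avg_noise_sq_def avg_noise_def mean_noise_sq_def
    using measurable_noise[OF t] by measurable
  have "(\<integral>\<^sup>+ y. ennreal (Phi (Z (Suc t) y) (C (Suc t) y)) \<partial>Samples)
      \<le> (\<integral>\<^sup>+ y. ennreal rate * ennreal (Phi (Z t y) (C t y)) + ennreal (round_noise t y) \<partial>Samples)"
  proof (rule nn_integral_mono)
    fix y
    have "ennreal (Phi (Z (Suc t) y) (C (Suc t) y)) \<le> ennreal (rate * Phi (Z t y) (C t y) + round_noise t y)"
      using Phi_Suc_le by (rule ennreal_leI)
    also have "\<dots> = ennreal rate * ennreal (Phi (Z t y) (C t y)) + ennreal (round_noise t y)"
      using rate_bounds Phi_nonneg round_noise_nonneg by (simp add: ennreal_plus ennreal_mult)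
    finally show "ennreal (Phi (Z (Suc t) y) (C (Suc t) y))
        \<le> ennreal rate * ennreal (Phi (Z t y) (C t y)) + ennreal (round_noise t y)" .
  qed
  also have "\<dots> = ennreal rate * (\<integral>\<^sup>+ y. ennreal (Phi (Z t y) (C t y)) \<partial>Samples)
      + (\<integral>\<^sup>+ y. ennreal (round_noise t y) \<partial>Samples)"
    using Pm Rm by (simp add: nn_integral_add nn_integral_cmult)
  also have "\<dots> \<le> ennreal rate * (\<integral>\<^sup>+ y. ennreal (Phi (Z t y) (C t y)) \<partial>Samples) + ennreal noise_floor"
    using expected_round_noise_le[OF t] by (rule add_left_mono)
  finally show ?thesis .
qed

lemma noise_floor_sum_le:
  "noise_floor * (\<Sum>j<T. rate ^ j) \<le> 25 * \<sigma>\<^sup>2 / (\<mu> * real B * real K) + \<sigma>\<^sup>2 / (16 * \<mu> * real B) + Bh / (2 * \<mu>)"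
proof -
  have "(\<Sum>j<T. rate ^ j) = (1 - rate ^ T) / (1 - rate)" using rate_bounds by (simp add: sum_gp_strict)
  also have "\<dots> \<le> 1 / (1 - rate)" using rate_bounds by (intro divide_right_mono) auto
  finally have "(\<Sum>j<T. rate ^ j) \<le> 1 / (1 - rate)" .
  then have "noise_floor * (\<Sum>j<T. rate ^ j) \<le> noise_floor * (1 / (1 - rate))"
    using noise_floor_nonneg by (intro mult_left_mono)
  also have "noise_floor * (1 / (1 - rate)) = (5 * err_weight) * \<sigma>\<^sup>2 / (\<mu> * real B * real K) + (25 * drift_weight) * \<sigma>\<^sup>2 / (\<mu> * real B)
      + (100 * drift_weight) * Bh / \<mu>"
    using alpha_pos mu_pos B_pos K_pos by (simp add: noise_floor_def rate_def field_simps)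
  also have "\<dots> \<le> 25 * \<sigma>\<^sup>2 / (\<mu> * real B * real K) + (1/16) * \<sigma>\<^sup>2 / (\<mu> * real B) + (1/2) * Bh / \<mu>"
    using err_weight_bounds drift_weight_bounds mu_pos B_pos K_pos Bh_nonneg
    by (intro add_mono divide_right_mono mult_right_mono) auto
  finally show ?thesis by simp
qed

theorem expected_Phi_le:
  "(\<integral>\<^sup>+ y. ennreal (Phi (Z T y) (C T y)) \<partial>Samples)
     \<le> ennreal (rate ^ T * Phi z0 c0 + 25 * \<sigma>\<^sup>2 / (\<mu> * real B * real K) + \<sigma>\<^sup>2 / (16 * \<mu> * real B)
        + Bh / (2 * \<mu>))"
proof -
  interpret prob_space Samples by (rule prob_space_Samples)
  define u where "u t = (\<integral>\<^sup>+ y. ennreal (Phi (Z t y) (C t y)) \<partial>Samples)" for t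
  have "u T \<le> ennreal (rate ^ T * Phi z0 c0 + noise_floor * (\<Sum>j<T. rate ^ j))"
  proof (rule ennreal_linear_recurrence_le)
    show "u (Suc t) \<le> ennreal rate * u t + ennreal noise_floor" if "t < T" for t
      using expected_Phi_Suc_le[OF that] by (simp add: u_def)
    show "u 0 \<le> ennreal (Phi z0 c0)" by (simp add: u_def Z_0 C_0 emeasure_space_1)
  qed (use rate_bounds noise_floor_nonneg Phi_nonneg in auto)
  also have "\<dots> \<le> ennreal (rate ^ T * Phi z0 c0 + 25 * \<sigma>\<^sup>2 / (\<mu> * real B * real K) + \<sigma>\<^sup>2 / (16 * \<mu> * real B)
        + Bh / (2 * \<mu>))"
    using noise_floor_sum_le by (intro ennreal_leI) simp
  finally show ?thesis by (simp add: u_def)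
qed

end

section \<open>Transfer to the given sample space\<close>

locale fedcanon_sampled = fedcanon_sampling gF f gradf h N K B L \<rho> \<mu> Bh \<alpha> \<beta> \<phi>star D \<sigma> z0 c0 T
  for gF :: "nat \<Rightarrow> 'a::euclidean_space \<Rightarrow> 'b \<Rightarrow> 'a"
    and f gradf h N K B L \<rho> \<mu> Bh \<alpha> \<beta> \<phi>star D \<sigma> z0 c0 T +
  fixes M :: "'w measure" and \<xi> :: "nat \<Rightarrow> nat \<Rightarrow> nat \<Rightarrow> nat \<Rightarrow> 'w \<Rightarrow> 'b"
  assumes T_pos: "T \<ge> 1"
    and M_prob: "prob_space M"
    and \<xi>_distr: "\<forall>t i k b. i < N \<and> k < K \<and> b < B \<longrightarrow>
                      \<xi> t i k b \<in> measurable M (D i) \<and> distr M (D i) (\<xi> t i k b) = D i"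
    and \<xi>_indep: "prob_space.indep_vars M (\<lambda>(t, i, k, b). D i) (\<lambda>(t, i, k, b). \<xi> t i k b)
                      {(t, i, k, b). i < N \<and> k < K \<and> b < B}"
begin

definition "sample_path x = (\<lambda>t i k b. \<xi> t i k b x)"
definition "sample x = (\<lambda>l\<in>Idx. case l of (t, i, k, b) \<Rightarrow> \<xi> t i k b x)"

lemma distr_sample: "sample \<in> measurable M Samples \<and> distr M Samples sample = Samples"
proof -
  interpret prob_space M by (rule M_prob)
  define X where "X l = (case l of (t, i, k, b) \<Rightarrow> \<xi> t i k b)" for l
  have Xm: "X l \<in> measurable M (Dsample l)" and Xd: "distr M (Dsample l) (X l) = Dsample l"
    if "l \<in> Idx" for l
    using that \<xi>_distr by (auto simp: X_def Idx_def Dsample_eq)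
  have sample: "sample = (\<lambda>x. \<lambda>l\<in>Idx. X l x)"
    by (auto simp: fun_eq_iff sample_def X_def split: prod.splits)
  have "indep_vars (\<lambda>(t, i, k, b). D i) (\<lambda>(t, i, k, b). \<xi> t i k b) Idx"
    by (rule indep_vars_subset[OF \<xi>_indep]) (auto simp: Idx_def)
  moreover have "(\<lambda>(t, i, k, b). D i) l = Dsample l" "(\<lambda>(t, i, k, b). \<xi> t i k b) l = X l" if "l \<in> Idx" for l
    using that by (auto simp: Idx_def Dsample_eq X_def)
  ultimately have "indep_vars Dsample X Idx"
    using indep_vars_cong[of Idx Idx "\<lambda>(t, i, k, b). \<xi> t i k b" X "\<lambda>(t, i, k, b). D i" Dsample] by blast
  moreover have "(0, 0, 0, 0) \<in> Idx" using T_pos N_pos K_pos B_pos by (simp add: Idx_def)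
  ultimately have "distr M Samples sample = PiM Idx (\<lambda>l. distr M (Dsample l) (X l))"
    using indep_vars_iff_distr_eq_PiM'[of Idx X Dsample] Xm unfolding Samples_def sample by blast
  also have "\<dots> = Samples"
    unfolding Samples_def by (rule PiM_cong) (auto simp: Xd)
  finally show ?thesis
    unfolding sample Samples_def by (auto intro!: measurable_restrict Xm)
qed

lemma fedcanon_sample_path_eq:
  "fst (fedcanon gF h N K B \<alpha> \<beta> z0 c0 (sample_path x) T) = Z T (sample x)"
  "i < N \<Longrightarrow> snd (fedcanon gF h N K B \<alpha> \<beta> z0 c0 (sample_path x) T) i = C T (sample x) i"
proof -
  define y where "y = (\<lambda>(t, i, k, b). \<xi> t i k b x)"
  have "sample_path x = rounds y" by (simp add: sample_path_def rounds_def y_def)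
  moreover have "Z T y = Z T (sample x) \<and> (\<forall>i<N. C T y i = C T (sample x) i)"
    by (rule Z_C_cong) (auto simp: y_def sample_def Idx_def)
  ultimately show "fst (fedcanon gF h N K B \<alpha> \<beta> z0 c0 (sample_path x) T) = Z T (sample x)"
    "i < N \<Longrightarrow> snd (fedcanon gF h N K B \<alpha> \<beta> z0 c0 (sample_path x) T) i = C T (sample x) i"
    by (simp_all add: Z_def C_def)
qed

theorem expected_lyapunov_le:
  defines "zT x \<equiv> fst (fedcanon gF h N K B \<alpha> \<beta> z0 c0 (sample_path x) T)"
    and "cT x \<equiv> snd (fedcanon gF h N K B \<alpha> \<beta> z0 c0 (sample_path x) T)"
  shows "(\<integral>\<^sup>+x. ennreal (phi (zT x) - \<phi>star) \<partial>M) + ennreal \<alpha> * (\<integral>\<^sup>+x. ennreal (Err (zT x) (cT x)) \<partial>M)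
     \<le> ennreal (rate ^ T * Phi z0 c0 + 25 * \<sigma>\<^sup>2 / (\<mu> * real B * real K) + \<sigma>\<^sup>2 / (16 * \<mu> * real B)
        + Bh / (2 * \<mu>))"
proof -
  define g1 where "g1 y = ennreal (phi (Z T y) - \<phi>star)" for y
  define g2 where "g2 y = ennreal (Err (Z T y) (C T y))" for y
  have Zm: "Z T \<in> borel_measurable Samples"
    and Cm: "\<And>i. i < N \<Longrightarrow> (\<lambda>y. C T y i) \<in> borel_measurable Samples"
    using measurable_Z_C[of T] by auto
  have g1m: "g1 \<in> borel_measurable Samples"
    unfolding g1_def[abs_def] using measurable_phi_comp[OF Zm] by measurable
  have "(\<lambda>y. gradf i (Z T y)) \<in> borel_measurable Samples" if "i < N" for i
    using measurable_gradf_comp[OF that Zm] .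
  then have g2m: "g2 \<in> borel_measurable Samples"
    unfolding g2_def[abs_def] Err_def grad_mean_def using Cm by measurable
  have "Err (zT x) (cT x) = Err (Z T (sample x)) (C T (sample x))" for x
    unfolding Err_def zT_def cT_def fedcanon_sample_path_eq by (intro arg_cong2[where f="(*)"] sum.cong)
      (simp_all add: fedcanon_sample_path_eq)
  then have "(\<integral>\<^sup>+x. ennreal (phi (zT x) - \<phi>star) \<partial>M) + ennreal \<alpha> * (\<integral>\<^sup>+x. ennreal (Err (zT x) (cT x)) \<partial>M)
      = (\<integral>\<^sup>+x. g1 (sample x) \<partial>M) + ennreal \<alpha> * (\<integral>\<^sup>+x. g2 (sample x) \<partial>M)"
    by (simp add: g1_def g2_def zT_def fedcanon_sample_path_eq)
  also have "\<dots> = (\<integral>\<^sup>+y. g1 y \<partial>Samples) + ennreal \<alpha> * (\<integral>\<^sup>+y. g2 y \<partial>Samples)"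
    using nn_integral_distr[of sample M Samples] distr_sample g1m g2m by simp
  also have "\<dots> = (\<integral>\<^sup>+y. ennreal (Phi (Z T y) (C T y)) \<partial>Samples)"
  proof -
    have "g1 y + ennreal \<alpha> * g2 y = ennreal (Phi (Z T y) (C T y))" for y
      by (simp add: g1_def g2_def ennreal_Phi)
    moreover have "(\<integral>\<^sup>+y. g1 y \<partial>Samples) + ennreal \<alpha> * (\<integral>\<^sup>+y. g2 y \<partial>Samples)
        = (\<integral>\<^sup>+y. g1 y + ennreal \<alpha> * g2 y \<partial>Samples)"
      using g1m g2m by (simp add: nn_integral_add nn_integral_cmult)
    ultimately show ?thesis by simp
  qed
  also have "\<dots> \<le> ennreal (rate ^ T * Phi z0 c0 + 25 * \<sigma>\<^sup>2 / (\<mu> * real B * real K) + \<sigma>\<^sup>2 / (16 * \<mu> * real B)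
        + Bh / (2 * \<mu>))"
    by (rule expected_Phi_le)
  finally show ?thesis .
qed

end

theorem theorem2:
  fixes F :: "nat \<Rightarrow> 'a::euclidean_space \<Rightarrow> 'b \<Rightarrow> real"
    and gF :: "nat \<Rightarrow> 'a \<Rightarrow> 'b \<Rightarrow> 'a"
    and f :: "nat \<Rightarrow> 'a \<Rightarrow> real"
    and gradf :: "nat \<Rightarrow> 'a \<Rightarrow> 'a"
    and h :: "'a \<Rightarrow> real"
    and D :: "nat \<Rightarrow> 'b measure"
    and M :: "'w measure"
    and \<xi> :: "nat \<Rightarrow> nat \<Rightarrow> nat \<Rightarrow> nat \<Rightarrow> 'w \<Rightarrow> 'b"
    and N K B T :: nat
    and L \<rho> \<mu> \<sigma> Bh \<alpha> \<beta> :: real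
    and z0 :: 'a and c0 :: "nat \<Rightarrow> 'a"
    and fbar :: "'a \<Rightarrow> real" and gradfbar :: "'a \<Rightarrow> 'a" and \<phi> :: "'a \<Rightarrow> real"
    and \<phi>star :: real and z :: "nat \<Rightarrow> 'w \<Rightarrow> 'a" and c :: "nat \<Rightarrow> 'w \<Rightarrow> nat \<Rightarrow> 'a"
    and Err :: "nat \<Rightarrow> 'w \<Rightarrow> real" and Err0 \<delta> :: real
  assumes "fbar = (\<lambda>x. (1 / real N) * (\<Sum>i<N. f i x))"
    and "gradfbar = (\<lambda>x. (1 / real N) *\<^sub>R (\<Sum>i<N. gradf i x))"
    and "\<phi> = (\<lambda>x. fbar x + h x)"
    and "\<phi>star = (INF x. \<phi> x)"
    and "z = (\<lambda>t \<omega>. fst (fedcanon gF h N K B \<alpha> \<beta> z0 c0 (\<lambda>t i k b. \<xi> t i k b \<omega>) t))"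
    and "c = (\<lambda>t \<omega>. snd (fedcanon gF h N K B \<alpha> \<beta> z0 c0 (\<lambda>t i k b. \<xi> t i k b \<omega>) t))"
    and "Err = (\<lambda>t \<omega>. (1 / real N) *
                 (\<Sum>i<N. (norm (gradf i (z t \<omega>) + c t \<omega> i - gradfbar (z t \<omega>)))\<^sup>2))"
    and "Err0 = (1 / real N) * (\<Sum>i<N. (norm (gradf i z0 + c0 i - gradfbar z0))\<^sup>2)"
    and "\<delta> = 1 / (1 - \<alpha> * \<rho>)\<^sup>2"
    and N_pos: "N > 0" and K_pos: "K > 0" and B_pos: "B > 0" and T_ge: "T \<ge> 1"
    (* probability model of the sampling, (A4) *)
    and M_prob: "prob_space M"
    and D_prob: "\<forall>i<N. prob_space (D i)"
    and \<xi>_distr: "\<forall>t i k b. i < N \<and> k < K \<and> b < B \<longrightarrow>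
                      \<xi> t i k b \<in> measurable M (D i) \<and> distr M (D i) (\<xi> t i k b) = D i"
    and \<xi>_indep: "prob_space.indep_vars M (\<lambda>(t, i, k, b). D i) (\<lambda>(t, i, k, b). \<xi> t i k b)
                      {(t, i, k, b). i < N \<and> k < K \<and> b < B}"
    and gF_meas: "\<forall>i<N. (\<lambda>(x, s). gF i x s) \<in> borel_measurable (borel \<Otimes>\<^sub>M D i)"
    and f_def: "\<forall>i<N. \<forall>x. integrable (D i) (F i x) \<and> f i x = (\<integral>s. F i x s \<partial>D i)"
    and F_grad: "\<forall>i<N. \<forall>x. \<forall>s\<in>space (D i).
                   ((\<lambda>y. F i y s) has_derivative (\<lambda>u. inner (gF i x s) u)) (at x)"
    and f_grad: "\<forall>i<N. \<forall>x. (f i has_derivative (\<lambda>u. inner (gradf i x) u)) (at x)"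
    and unbiased: "\<forall>i<N. \<forall>x. integrable (D i) (gF i x) \<and> (\<integral>s. gF i x s \<partial>D i) = gradf i x"
    and variance: "\<forall>i<N. \<forall>x. (\<integral>\<^sup>+s. ennreal ((norm (gF i x s - gradf i x))\<^sup>2) \<partial>D i) \<le> ennreal (\<sigma>\<^sup>2)"
    (* (A2) *)
    and L_pos: "L > 0"
    and smooth: "\<forall>i<N. \<forall>x y. f i x - f i y - inner (gradf i y) (x - y) \<le> L / 2 * (norm (x - y))\<^sup>2
                         \<and> norm (gradf i x - gradf i y) \<le> L * norm (x - y)"
    (* (A3) *)
    and rho_nonneg: "\<rho> \<ge> 0"
    and weakly_convex: "convex_on UNIV (\<lambda>x. h x + \<rho> / 2 * (norm x)\<^sup>2)"
    and subgrad_bdd: "\<forall>x. \<forall>v\<in>subdiff h x. (norm v)\<^sup>2 \<le> Bh"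
    (* (A1) *)
    and bdd: "bdd_below (range \<phi>)"
    (* (A5) *)
    and mu_pos: "\<mu> > 0"
    and PL: "\<forall>x. (norm (Gmap \<alpha> h x (gradfbar x)))\<^sup>2 \<ge> 2 * \<mu> * (\<phi> x - \<phi>star)"
    (* algorithm inputs and step sizes *)
    and c0_sum: "(\<Sum>i<N. c0 i) = 0"
    and alpha_pos: "\<alpha> > 0" and beta_pos: "\<beta> > 0"
    and step_alpha: "0 < \<alpha> * (\<rho> + L) + 4 * \<alpha>\<^sup>2 * L\<^sup>2"
                    "\<alpha> * (\<rho> + L) + 4 * \<alpha>\<^sup>2 * L\<^sup>2 \<le> min (1 / 2) ((4 * \<mu> * (\<rho> + L) + 64 * L\<^sup>2) / \<mu>\<^sup>2)"
    and step_beta: "12 * (6 + \<delta>) * \<beta>\<^sup>2 * (real K)\<^sup>2 * L\<^sup>2 \<le> min (1 / 16) (1 - \<alpha> * \<mu> / 4)"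
  shows "(\<integral>\<^sup>+\<omega>. ennreal (\<phi> (z T \<omega>) - \<phi>star) \<partial>M) + ennreal \<alpha> * (\<integral>\<^sup>+\<omega>. ennreal (Err T \<omega>) \<partial>M)
         \<le> ennreal ((1 - \<alpha> * \<mu> / 4) ^ T * (\<phi> z0 - \<phi>star + \<alpha> * Err0)
                    + 25 * \<sigma>\<^sup>2 / (\<mu> * real B * real K) + \<sigma>\<^sup>2 / (16 * \<mu> * real B) + Bh / (2 * \<mu>))"
proof -
  have "\<forall>x. \<phi>star \<le> \<phi> x"
    using bdd by (auto simp: assms(4) intro: cINF_lower)
  then interpret fedcanon_sampled gF f gradf h N K B L \<rho> \<mu> Bh \<alpha> \<beta> \<phi>star D \<sigma> z0 c0 T M \<xi>
    by (intro fedcanon_sampled.intro fedcanon_sampling.intro fedcanon_analysis.intro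
        fedcanon_sampling_axioms.intro fedcanon_sampled_axioms.intro)
      (use N_pos K_pos B_pos T_ge M_prob D_prob \<xi>_distr \<xi>_indep gF_meas f_grad
        unbiased variance L_pos smooth rho_nonneg weakly_convex subgrad_bdd mu_pos PL c0_sum
        alpha_pos beta_pos step_alpha step_beta in \<open>simp_all add: assms(1-3,9)\<close>)
  show ?thesis
    using expected_lyapunov_le
    by (simp add: assms(1-3,5-9) rate_def Phi_def phi_def Err_def grad_mean_def sample_path_def)
qed

end
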